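(* Let $p$ be a prime and let $P$ be a finite $p$-group which can be generated by at most two elements. Let $f$ be a prime power such that $\mathrm{PSL}(2,f)$ is a non-abelian simple group, and suppose $\mathrm{PSL}(2,f)$ acts on $P$ via automorphisms. Then the action of $\mathrm{PSL}(2,f)$ on $P$ is trivial. *)

theory Defs
  imports "HOL-Algebra.Algebra"
begin

text \<open>2x2 matrices over a ring K, written as tuples (a, b, c, d) for the matrix
  with rows (a b) and (c d). SL(2,K) with matrix multiplication.\<close>

definition mat2_mult :: "('a, 'b) ring_scheme \<Rightarrow> ('a \<times> 'a \<times> 'a \<times> 'a) \<Rightarrow> ('a \<times> 'a \<times> 'a \<times> 'a) \<Rightarrow> ('a \<times> 'a \<times> 'a \<times> 'a)" where
  "mat2_mult K M N = (case M of (a, b, c, d) \<Rightarrow> case N of (e, f, g, h) \<Rightarrow>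
                       ((a \<otimes>\<^bsub>K\<^esub> e) \<oplus>\<^bsub>K\<^esub> (b \<otimes>\<^bsub>K\<^esub> g), (a \<otimes>\<^bsub>K\<^esub> f) \<oplus>\<^bsub>K\<^esub> (b \<otimes>\<^bsub>K\<^esub> h),
                        (c \<otimes>\<^bsub>K\<^esub> e) \<oplus>\<^bsub>K\<^esub> (d \<otimes>\<^bsub>K\<^esub> g), (c \<otimes>\<^bsub>K\<^esub> f) \<oplus>\<^bsub>K\<^esub> (d \<otimes>\<^bsub>K\<^esub> h)))"

definition SL2_carrier :: "('a, 'b) ring_scheme \<Rightarrow> ('a \<times> 'a \<times> 'a \<times> 'a) set" where
  "SL2_carrier K = {(a, b, c, d). a \<in> carrier K \<and> b \<in> carrier K \<and> c \<in> carrier K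
                         \<and> d \<in> carrier K \<and> (a \<otimes>\<^bsub>K\<^esub> d) \<ominus>\<^bsub>K\<^esub> (b \<otimes>\<^bsub>K\<^esub> c) = \<one>\<^bsub>K\<^esub>}"

definition mat2_id :: "('a, 'b) ring_scheme \<Rightarrow> ('a \<times> 'a \<times> 'a \<times> 'a)" where
  "mat2_id K = (\<one>\<^bsub>K\<^esub>, \<zero>\<^bsub>K\<^esub>, \<zero>\<^bsub>K\<^esub>, \<one>\<^bsub>K\<^esub>)"

definition SL2 :: "('a, 'b) ring_scheme \<Rightarrow> ('a \<times> 'a \<times> 'a \<times> 'a) monoid" where
  "SL2 K = \<lparr> carrier = SL2_carrier K, Group.monoid.mult = mat2_mult K,
             one = mat2_id K \<rparr>"

definition SL2_centre :: "('a, 'b) ring_scheme \<Rightarrow> ('a \<times> 'a \<times> 'a \<times> 'a) set" where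
  "SL2_centre K = {(\<one>\<^bsub>K\<^esub>, \<zero>\<^bsub>K\<^esub>, \<zero>\<^bsub>K\<^esub>, \<one>\<^bsub>K\<^esub>),
                   (\<ominus>\<^bsub>K\<^esub> \<one>\<^bsub>K\<^esub>, \<zero>\<^bsub>K\<^esub>, \<zero>\<^bsub>K\<^esub>, \<ominus>\<^bsub>K\<^esub> \<one>\<^bsub>K\<^esub>)}"

definition PSL2 :: "('a, 'b) ring_scheme \<Rightarrow> ('a \<times> 'a \<times> 'a \<times> 'a) set monoid" where
  "PSL2 K = SL2 K Mod SL2_centre K"

end

(*
  Let \<Phi> be the subgroup of P generated by p-th powers and commutators. Every maximal subgroup of
  the p-group P is normal of index p and therefore contains \<Phi>; hence \<Phi> is non-generating, and
  P/\<Phi> is elementary abelian, generated by the images of the two generators of P.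

  If P is cyclic, Aut P is abelian and the perfect group G acts trivially. Otherwise G acts on
  P/\<Phi> through integer 2x2 matrices taken modulo p. Perfectness forces all determinants to be 1;
  for p = 2 it also forces every matrix to be an even permutation of the three nonzero vectors,
  so all commutators act trivially, and for odd p an involution of G acts as +1 or -1, so it lies
  in, or is central modulo, the kernel. Either way simplicity makes G act trivially on P/\<Phi>.

  An element of prime order q \<noteq> p acting trivially on P/\<Phi> fixes a point in every coset of \<Phi>
  (these have p-power size), so its fixed points together with \<Phi> generate P: it acts trivially.
  PSL(2, f) contains elements of order 2 and 3, one of which has order prime to p, so the kernel of
  the action is a nontrivial normal subgroup of the simple group PSL(2, f).
*)

theory Submission
  imports Defs "HOL-Number_Theory.Residues"
begin

section \<open>Fixed points of actions of groups of prime power order\<close>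

lemma group_action_restrict:
  fixes H (structure)
  assumes "group H"
    and closed: "\<And>h s. h \<in> carrier H \<Longrightarrow> s \<in> S \<Longrightarrow> act h s \<in> S"
    and one: "\<And>s. s \<in> S \<Longrightarrow> act \<one> s = s"
    and mult: "\<And>g h s. g \<in> carrier H \<Longrightarrow> h \<in> carrier H \<Longrightarrow> s \<in> S \<Longrightarrow>
                 act (g \<otimes> h) s = act g (act h s)"
  shows "group_action H S (\<lambda>h. restrict (act h) S)"
proof -
  interpret H: group H by fact
  have bij: "restrict (act h) S \<in> Bij S" if h: "h \<in> carrier H" for h
  proof -
    have "bij_betw (act h) S S"
      by (rule bij_betwI[where g = "act (inv h)"])
         (use h closed in \<open>auto simp flip: mult simp: one\<close>)
    then show ?thesis
      by (simp add: Bij_def bij_betw_def inj_on_def)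
  qed
  have "(\<lambda>h. restrict (act h) S) \<in> hom H (BijGroup S)"
    by (rule homI) (auto simp: BijGroup_def bij compose_def mult closed fun_eq_iff)
  then show ?thesis
    by (simp add: group_action_def group_hom_def group_hom_axioms_def group_BijGroup)
qed

lemma (in group_action) prime_dvd_card_orbit:
  assumes q: "Factorial_Ring.prime q" and ord: "order G = q ^ k" and x: "x \<in> E"
    and moved: "g \<in> carrier G" "\<phi> g x \<noteq> x"
  shows "q dvd card (orbit G \<phi> x)"
proof -
  have "card (orbit G \<phi> x) * card (stabilizer G \<phi> x) = q ^ k"
    using orbit_stabilizer_theorem[OF x] ord by simp
  then obtain i where i: "card (orbit G \<phi> x) = q ^ i"
    using divides_primepow_nat[OF q] by (metis dvd_triv_left)
  have "x \<in> orbit G \<phi> x" "\<phi> g x \<in> orbit G \<phi> x"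
    using orbit_refl[OF x] moved(1) by (auto simp: orbit_def)
  then have "card (orbit G \<phi> x) \<noteq> 1"
    using moved(2) by (metis card_1_singletonE singletonD)
  then show ?thesis
    using i by (cases i) auto
qed

lemma (in group_action) prime_dvd_card_non_fixed_points:
  assumes q: "Factorial_Ring.prime q" and ord: "order G = q ^ k" and fin: "finite E"
  shows "q dvd card (E - {x \<in> E. \<forall>g \<in> carrier G. \<phi> g x = x})"
proof -
  define F where "F = {x \<in> E. \<forall>g \<in> carrier G. \<phi> g x = x}"
  let ?moved = "\<lambda>x. if x \<in> F then 0 else 1 :: nat"
  have "q dvd (\<Sum>x\<in>orb. ?moved x)" if orb_in: "orb \<in> orbits G E \<phi>" for orb
  proof -
    obtain y where y: "y \<in> E" and orb: "orb = orbit G \<phi> y"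
      using orb_in unfolding orbits_def by blast
    show ?thesis
    proof (cases "y \<in> F")
      case True
      then have "orb = {y}" using orbit_refl[OF y] by (auto simp: orb orbit_def F_def)
      then show ?thesis using True by simp
    next
      case False
      then obtain g where g: "g \<in> carrier G" "\<phi> g y \<noteq> y"
        using y by (auto simp: F_def)
      have "x \<notin> F" if "x \<in> orb" for x
      proof
        assume "x \<in> F"
        then have "y \<in> F"
          using that y orbit_sym[OF y, of x] element_image unfolding orb
          by (fastforce simp: F_def orbit_def)
        then show False using False by simp
      qed
      then have "(\<Sum>x\<in>orb. ?moved x) = card orb" by simp
      then show ?thesis
        using prime_dvd_card_orbit[OF q ord y g] orb by simp
    qed
  qed
  then have "q dvd (\<Sum>orb\<in>orbits G E \<phi>. \<Sum>x\<in>orb. ?moved x)"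
    by (rule dvd_sum)
  also have "(\<Sum>orb\<in>orbits G E \<phi>. \<Sum>x\<in>orb. ?moved x) = (\<Sum>x\<in>E. ?moved x)"
    by (rule disjoint_sum[OF fin])
  also have "\<dots> = card (E - F)"
    using fin by (simp add: sum.If_cases Diff_eq)
  finally show ?thesis by (simp add: F_def)
qed

lemma prime_dvd_card_non_fixed_points':
  fixes H (structure)
  assumes "group H" and "Factorial_Ring.prime q" and "order H = q ^ k" and "finite S"
    and "\<And>h s. h \<in> carrier H \<Longrightarrow> s \<in> S \<Longrightarrow> act h s \<in> S"
    and "\<And>s. s \<in> S \<Longrightarrow> act \<one> s = s"
    and "\<And>g h s. g \<in> carrier H \<Longrightarrow> h \<in> carrier H \<Longrightarrow> s \<in> S \<Longrightarrow>
           act (g \<otimes> h) s = act g (act h s)"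
  shows "q dvd card (S - {s \<in> S. \<forall>h \<in> carrier H. act h s = s})"
proof -
  interpret group_action H S "\<lambda>h. restrict (act h) S"
    by (rule group_action_restrict) fact+
  have "{s \<in> S. \<forall>h \<in> carrier H. restrict (act h) S s = s} = {s \<in> S. \<forall>h \<in> carrier H. act h s = s}"
    by auto
  then show ?thesis
    using prime_dvd_card_non_fixed_points[OF assms(2,3,4)] by simp
qed

section \<open>Maximal subgroups of finite \<open>p\<close>-groups\<close>

lemma (in group) normalizerI_finite:
  assumes H: "subgroup H G" "finite H" and a: "a \<in> carrier G"
    and conj: "\<And>h. h \<in> H \<Longrightarrow> a \<otimes> h \<otimes> inv a \<in> H"
  shows "a \<in> normalizer G H"
proof -
  interpret H: subgroup H G by (rule H(1))
  have "inj_on (\<lambda>h. a \<otimes> h \<otimes> inv a) H"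
    by (rule inj_onI) (use a H.subset in auto)
  moreover have "(\<lambda>h. a \<otimes> h \<otimes> inv a) ` H \<subseteq> H"
    using conj by auto
  ultimately have "(\<lambda>h. a \<otimes> h \<otimes> inv a) ` H = H"
    using H(2) by (simp add: endo_inj_surj)
  then show ?thesis
    using a H.subset by (auto simp: normalizer_def stabilizer_def l_coset_def r_coset_def)
qed

lemma (in group) fixed_rcoset_normalizes:
  assumes H: "subgroup H G" and a: "a \<in> carrier G"
    and fixed: "\<And>h. h \<in> H \<Longrightarrow> H #> a #> h = H #> a" and h: "h \<in> H"
  shows "a \<otimes> h \<otimes> inv a \<in> H"
proof -
  interpret H: subgroup H G by (rule H)
  have hG: "h \<in> carrier G" using h H.subset by auto
  have "a \<otimes> h \<in> H #> (a \<otimes> h)"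
    using a hG rcos_self[OF _ H] by simp
  also have "H #> (a \<otimes> h) = H #> a"
    using fixed[OF h] a hG H.subset by (simp add: coset_mult_assoc)
  finally show ?thesis
    using H.rcos_module_imp[OF is_group a] by simp
qed

locale p_group = group G for G (structure) +
  fixes p :: nat
  assumes prime_p: "Factorial_Ring.prime p"
    and finite_carrier: "finite (carrier G)"
    and order_prime_power: "\<exists>n. order G = p ^ n"
begin

lemma card_subgroup_prime_power:
  assumes "subgroup H G"
  shows "\<exists>j. card H = p ^ j"
proof -
  obtain n where "order G = p ^ n" using order_prime_power by blast
  then have "card H dvd p ^ n"
    using lagrange[OF assms] by (metis dvd_triv_right)
  then show ?thesis
    using divides_primepow_nat[OF prime_p] by auto
qed

lemma prime_dvd_index:
  assumes H: "subgroup H G" and proper: "H \<noteq> carrier G"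
  shows "p dvd card (rcosets H)"
proof -
  obtain n where n: "order G = p ^ n" using order_prime_power by blast
  then obtain j where j: "card (rcosets H) = p ^ j"
    using lagrange[OF H] divides_primepow_nat[OF prime_p] by (metis dvd_triv_left)
  have "j \<noteq> 0"
  proof
    assume "j = 0"
    then have "card H = order G" using lagrange[OF H] j by simp
    then show False
      using H proper finite_carrier by (metis card_subset_eq order_def subgroup.subset)
  qed
  then show ?thesis using j by simp
qed

text \<open>The subgroup \<open>H\<close> acts on its right cosets, fixing \<open>H\<close> itself, and the fixed cosets are
  exactly those of elements normalising \<open>H\<close>. Counting modulo \<open>p\<close> produces a second fixed coset.\<close>

lemma proper_subgroup_normalizer_grows:
  assumes H: "subgroup H G" and proper: "H \<noteq> carrier G"
  shows "\<exists>a \<in> carrier G - H. \<forall>h \<in> H. a \<otimes> h \<otimes> inv a \<in> H"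
proof -
  interpret H: subgroup H G by (rule H)
  define HH where "HH = G\<lparr>carrier := H\<rparr>"
  define act where "act = (\<lambda>h Y. Y #> inv h)"
  define F where "F = {Y \<in> rcosets H. \<forall>h \<in> carrier HH. act h Y = Y}"
  have finite_rcosets: "finite (rcosets H)"
    using finite_carrier rcosets_subset_PowG[OF H] by (meson finite_Pow_iff finite_subset)
  have coset_mult: "(H #> a) #> b = H #> (a \<otimes> b)" if "a \<in> carrier G" "b \<in> carrier G" for a b
    using that H.subset by (simp add: coset_mult_assoc)
  obtain j where "card H = p ^ j" using card_subgroup_prime_power[OF H] by blast
  then have "p dvd card (rcosets H - F)"
    unfolding F_def
  proof (intro prime_dvd_card_non_fixed_points'[OF _ prime_p])
    show "group HH" unfolding HH_def by (rule subgroup_imp_group[OF H])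
  qed (use finite_rcosets in
        \<open>auto simp: HH_def order_def act_def RCOSETS_def coset_mult inv_mult_group m_assoc
          H.subset[THEN subsetD]\<close>)
  moreover have "F \<subseteq> rcosets H" by (auto simp: F_def)
  then have "card (rcosets H) = card F + card (rcosets H - F)"
    using finite_rcosets by (simp add: card_Diff_subset card_mono finite_subset)
  ultimately have "p dvd card F"
    using prime_dvd_index[OF H proper] by (simp add: dvd_add_left_iff)
  have H_in_F: "H \<in> F"
    using H.subgroup_in_rcosets[OF is_group] H.rcos_const[OF is_group]
    by (simp add: F_def HH_def act_def)
  have "finite F" using finite_rcosets F_def by simp
  then have "card F \<ge> 2"
    using \<open>p dvd card F\<close> H_in_F prime_ge_2_nat[OF prime_p]
    by (metis card_0_eq dvd_imp_le empty_iff gr0I order_trans)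
  then obtain Y where Y: "Y \<in> F" "Y \<noteq> H"
    using H_in_F \<open>finite F\<close> by (metis card_le_Suc0_iff_eq not_less_eq_eq numeral_2_eq_2)
  then obtain a where a: "a \<in> carrier G" "Y = H #> a" by (auto simp: F_def RCOSETS_def)
  have "a \<notin> H" using a Y H.rcos_const[OF is_group] by auto
  moreover have "a \<otimes> h \<otimes> inv a \<in> H" if "h \<in> H" for h
  proof (rule fixed_rcoset_normalizes[OF H a(1) _ that])
    fix h' assume "h' \<in> H"
    then have "act (inv h') Y = Y" using Y(1) by (auto simp: F_def HH_def)
    then show "H #> a #> h' = H #> a"
      using \<open>h' \<in> H\<close> a H.subset by (auto simp: act_def)
  qed
  ultimately show ?thesis using a by blast
qed

end

lemma (in group) generate_singleton_imp_comm_group: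
  assumes "a \<in> carrier G" and "generate G {a} = carrier G"
  shows "comm_group G"
proof (rule cyclic_imp_abelian_group)
  have "subgroup_generated G {a} = G"
    using assms by (simp add: subgroup_generated_def Int_absorb1)
  then show "cyclic_group G"
    using assms(1) by (auto simp: cyclic_group_def)
qed

lemma (in group) prime_power_order_without_proper_subgroups:
  assumes fin: "finite (carrier G)" and p: "Factorial_Ring.prime p"
    and ord: "order G = p ^ j" and j: "j \<ge> 1"
    and no_proper: "\<And>A. subgroup A G \<Longrightarrow> A = {\<one>} \<or> A = carrier G"
  shows "order G = p" and "comm_group G"
proof -
  have p1: "p > 1" using p prime_gt_1_nat by blast
  have generates: "generate G {a} = carrier G" if "a \<in> carrier G" "a \<noteq> \<one>" for a
    using no_proper[OF generate_is_subgroup] generate.incl[of a "{a}" G] that by blast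
  have "p ^ j > 1" using j p1 by (intro one_less_power) auto
  then have "carrier G \<noteq> {\<one>}" using ord by (auto simp: order_def)
  then obtain a where a: "a \<in> carrier G" "a \<noteq> \<one>" using one_closed by blast
  then show "comm_group G"
    using generate_singleton_imp_comm_group generates by blast
  have ord_a: "ord a = p ^ j"
    using generate_pow_card[OF a(1)] generates[OF a] ord by (simp add: order_def)
  define b where "b = a [^] (p ^ (j - 1))"
  have b: "b \<in> carrier G" using a by (simp add: b_def)
  have "p ^ j = p * p ^ (j - 1)" using j by (cases j) auto
  then have ord_b: "ord b = p"
    unfolding b_def using ord_pow[OF a(1), of "p ^ (j - 1)"] ord_a p1 by simp
  then have "b \<noteq> \<one>" using p1 by auto
  then show "order G = p"
    using generate_pow_card[OF b] generates[OF b] ord_b by (simp add: order_def)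
qed

definition maximal_subgroup :: "('g, 'c) monoid_scheme \<Rightarrow> 'g set \<Rightarrow> bool" where
  "maximal_subgroup G M \<longleftrightarrow> subgroup M G \<and> M \<noteq> carrier G \<and>
     (\<forall>K. subgroup K G \<longrightarrow> M \<subseteq> K \<longrightarrow> K = M \<or> K = carrier G)"

lemma (in group) quotient_by_maximal_subgroup_no_proper_subgroups:
  assumes max: "maximal_subgroup G M" and M: "M \<lhd> G" and A: "subgroup A (G Mod M)"
  shows "A = {\<one>\<^bsub>G Mod M\<^esub>} \<or> A = carrier (G Mod M)"
proof -
  interpret M: normal M G by (rule M)
  have U: "\<Union>A = {x \<in> carrier G. M #> x \<in> A}"
    by (rule M.factgroup_subgroup_union_char[OF A])
  have "M \<in> A" using subgroup.one_closed[OF A] by simp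
  then have "M \<subseteq> \<Union>A" by auto
  then have "\<Union>A = M \<or> \<Union>A = carrier G"
    using max M.factgroup_subgroup_union_subgroup[OF A] by (auto simp: maximal_subgroup_def)
  then show ?thesis
  proof
    assume "\<Union>A = M"
    have "Y = M" if Y: "Y \<in> A" for Y
    proof -
      obtain a where a: "a \<in> carrier G" "Y = M #> a"
        using subgroup.subset[OF A] Y by (auto simp: FactGroup_def RCOSETS_def)
      then have "a \<in> M" using U \<open>\<Union>A = M\<close> Y by auto
      then show ?thesis using a M.rcos_const[OF is_group] by simp
    qed
    then have "A = {M}" using \<open>M \<in> A\<close> by blast
    then show ?thesis by simp
  next
    assume "\<Union>A = carrier G"
    then have "carrier (G Mod M) \<subseteq> A"
      using U by (auto simp: FactGroup_def RCOSETS_def)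
    then show ?thesis using subgroup.subset[OF A] by blast
  qed
qed

context p_group
begin

lemma maximal_subgroup_normal:
  assumes max: "maximal_subgroup G M"
  shows "M \<lhd> G"
proof -
  have M: "subgroup M G" and proper: "M \<noteq> carrier G"
    using max by (auto simp: maximal_subgroup_def)
  interpret M: subgroup M G by (rule M)
  have fin: "finite M" using finite_carrier M.subset finite_subset by blast
  have "M \<subseteq> normalizer G M"
    using M.subset by (auto intro!: normalizerI_finite[OF M fin])
  moreover obtain a where "a \<in> carrier G - M" "\<forall>h \<in> M. a \<otimes> h \<otimes> inv a \<in> M"
    using proper_subgroup_normalizer_grows[OF M proper] by blast
  then have "a \<in> normalizer G M - M" by (auto intro: normalizerI_finite[OF M fin])
  ultimately have "normalizer G M = carrier G"
    using max normalizer_imp_subgroup[OF M.subset] by (auto simp: maximal_subgroup_def)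
  then show ?thesis
    using subgroup_in_normalizer[OF M] by simp
qed

lemma quotient_by_maximal_subgroup:
  assumes max: "maximal_subgroup G M"
  shows "order (G Mod M) = p" and "comm_group (G Mod M)"
proof -
  have M: "subgroup M G" and proper: "M \<noteq> carrier G"
    using max by (auto simp: maximal_subgroup_def)
  interpret M: normal M G by (rule maximal_subgroup_normal[OF max])
  obtain n where "order G = p ^ n" using order_prime_power by blast
  then obtain j where j: "card (rcosets M) = p ^ j"
    using lagrange[OF M] divides_primepow_nat[OF prime_p] by (metis dvd_triv_left)
  then have "j \<ge> 1"
    using prime_dvd_index[OF M proper] prime_p by (cases j) auto
  moreover have "order (G Mod M) = p ^ j" using j by (simp add: order_def FactGroup_def)
  moreover have "finite (carrier (G Mod M))"
    using finite_carrier by (simp add: carrier_FactGroup)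
  ultimately show "order (G Mod M) = p" and "comm_group (G Mod M)"
    using group.prime_power_order_without_proper_subgroups[OF M.factorgroup_is_group _ prime_p]
      quotient_by_maximal_subgroup_no_proper_subgroups[OF max M.normal_axioms] by blast+
qed

lemma pow_in_maximal_subgroup:
  assumes max: "maximal_subgroup G M" and a: "a \<in> carrier G"
  shows "a [^] p \<in> M"
proof -
  interpret M: normal M G by (rule maximal_subgroup_normal[OF max])
  interpret Q: group "G Mod M" by (rule M.factorgroup_is_group)
  have "M #> a \<in> carrier (G Mod M)" using a by (auto simp: FactGroup_def RCOSETS_def)
  then have "(M #> a) [^]\<^bsub>G Mod M\<^esub> p = M"
    using Q.pow_order_eq_1 quotient_by_maximal_subgroup(1)[OF max] by simp
  then have "M #> (a [^] p) = M" by (simp add: M.FactGroup_pow[OF a])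
  then show ?thesis
    using rcos_self[OF _ M.subgroup_axioms, of "a [^] p"] a by simp
qed

lemma commutator_in_maximal_subgroup:
  assumes max: "maximal_subgroup G M" and a: "a \<in> carrier G" and b: "b \<in> carrier G"
  shows "a \<otimes> b \<otimes> inv a \<otimes> inv b \<in> M"
proof -
  interpret M: normal M G by (rule maximal_subgroup_normal[OF max])
  have "comm_group (G Mod M)" by (rule quotient_by_maximal_subgroup(2)[OF max])
  then have "derived G (carrier G) \<subseteq> M" by (rule derived_minimal[OF M.normal_axioms])
  moreover have "a \<otimes> b \<otimes> inv a \<otimes> inv b \<in> derived G (carrier G)"
    using a b by (auto simp: derived_def intro: generate.incl)
  ultimately show ?thesis by blast
qed

lemma maximal_subgroup_above:
  assumes H: "subgroup H G" and proper: "H \<noteq> carrier G"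
  shows "\<exists>M. maximal_subgroup G M \<and> H \<subseteq> M"
proof -
  define S where "S = {K. subgroup K G \<and> H \<subseteq> K \<and> K \<noteq> carrier G}"
  have "finite S"
    by (rule finite_subset[of _ "Pow (carrier G)"]) (use finite_carrier subgroup.subset in \<open>auto simp: S_def\<close>)
  moreover have "H \<in> S" using H proper by (simp add: S_def)
  ultimately have "Max (card ` S) \<in> card ` S" by (intro Max_in) auto
  then obtain K where K: "K \<in> S" "card K = Max (card ` S)" by auto
  have largest: "card K' \<le> card K" if "K' \<in> S" for K'
    using K(2) Max_ge[of "card ` S"] \<open>finite S\<close> that by simp
  have "maximal_subgroup G K"
    unfolding maximal_subgroup_def
  proof (intro conjI allI impI)
    show "subgroup K G" "K \<noteq> carrier G" using K by (auto simp: S_def)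
    fix K' assume K': "subgroup K' G" "K \<subseteq> K'"
    show "K' = K \<or> K' = carrier G"
    proof (rule disjCI)
      assume "K' \<noteq> carrier G"
      then have "card K' \<le> card K" using K K' by (intro largest) (auto simp: S_def)
      moreover have "finite K'" using finite_subset[OF subgroup.subset[OF K'(1)] finite_carrier] .
      ultimately show "K' = K" using card_seteq K'(2) by blast
    qed
  qed
  then show ?thesis using K by (auto simp: S_def)
qed

end

section \<open>The Frattini subgroup\<close>

text \<open>For a finite \<open>p\<close>-group this is the Frattini subgroup; only its description by generators,
  the \<open>p\<close>-th powers and the commutators, is used.\<close>

definition frattini :: "('g, 'c) monoid_scheme \<Rightarrow> nat \<Rightarrow> 'g set" where
  "frattini G p = generate G ((\<lambda>a. a [^]\<^bsub>G\<^esub> p) ` carrier G \<union> derived_set G (carrier G))"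

lemma (in group) endomorphism_frattini_closed:
  assumes \<sigma>: "\<sigma> \<in> hom G G" and a: "a \<in> frattini G p"
  shows "\<sigma> a \<in> frattini G p"
proof -
  interpret \<sigma>: group_hom G G \<sigma> by (unfold_locales) (rule \<sigma>)
  define S where "S = (\<lambda>a. a [^] p) ` carrier G \<union> derived_set G (carrier G)"
  have S: "S \<subseteq> carrier G" by (auto simp: S_def)
  have "\<sigma> ` S \<subseteq> S"
    by (auto simp: S_def \<sigma>.hom_nat_pow) (metis \<sigma>.hom_closed)+
  then have "generate G (\<sigma> ` S) \<subseteq> generate G S" by (rule mono_generate)
  then show ?thesis
    using a \<sigma>.generate_img[OF S] by (auto simp: frattini_def S_def[symmetric])
qed

lemma (in group) frattini_subgroup: "subgroup (frattini G p) G"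
  unfolding frattini_def by (rule generate_is_subgroup) auto

lemma (in group) frattini_normal: "frattini G p \<lhd> G"
proof (rule normal_invI[OF frattini_subgroup])
  fix g h assume g: "g \<in> carrier G" and h: "h \<in> frattini G p"
  have cancel: "inv g \<otimes> (g \<otimes> z) = z" if "z \<in> carrier G" for z
    using g that by (simp flip: m_assoc)
  have "(\<lambda>x. g \<otimes> x \<otimes> inv g) \<in> hom G G"
    using g by (intro homI) (auto simp: m_assoc cancel)
  then show "g \<otimes> h \<otimes> inv g \<in> frattini G p"
    using endomorphism_frattini_closed h by blast
qed

context p_group
begin

abbreviation \<Phi> where "\<Phi> \<equiv> frattini G p"

lemma frattini_subset_maximal_subgroup:
  assumes "maximal_subgroup G M"
  shows "\<Phi> \<subseteq> M"
  unfolding frattini_def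
proof (rule generate_subgroup_incl)
  show "subgroup M G" using assms by (simp add: maximal_subgroup_def)
qed (use pow_in_maximal_subgroup[OF assms] commutator_in_maximal_subgroup[OF assms] in auto)

lemma frattini_nongenerating:
  assumes H: "subgroup H G" and cover: "\<And>w. w \<in> carrier G \<Longrightarrow> \<exists>h \<in> H. \<exists>f \<in> \<Phi>. w = h \<otimes> f"
  shows "H = carrier G"
proof (rule ccontr)
  assume "H \<noteq> carrier G"
  then obtain M where M: "maximal_subgroup G M" "H \<subseteq> M"
    using maximal_subgroup_above[OF H] by blast
  then interpret M: subgroup M G by (simp add: maximal_subgroup_def)
  have "carrier G \<subseteq> M"
    using cover M(2) frattini_subset_maximal_subgroup[OF M(1)] by blast
  then show False
    using M(1) M.subset by (auto simp: maximal_subgroup_def)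
qed

abbreviation Q where "Q \<equiv> G Mod \<Phi>"

definition \<pi> :: "'a \<Rightarrow> 'a set" where "\<pi> a = \<Phi> #> a"

lemma quotient_group: "group Q"
  by (rule normal.factorgroup_is_group[OF frattini_normal])

lemma \<pi>_group_hom: "group_hom G Q \<pi>"
proof (rule group_hom.intro[OF is_group quotient_group])
  show "group_hom_axioms G Q \<pi>"
    unfolding group_hom_axioms_def \<pi>_def[abs_def] by (rule normal.r_coset_hom_Mod[OF frattini_normal])
qed

lemma \<pi>_surj: "q \<in> carrier Q \<Longrightarrow> \<exists>a \<in> carrier G. q = \<pi> a"
  by (auto simp: \<pi>_def FactGroup_def RCOSETS_def)

lemma \<pi>_eq_one_iff: "a \<in> carrier G \<Longrightarrow> \<pi> a = \<one>\<^bsub>Q\<^esub> \<longleftrightarrow> a \<in> \<Phi>"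
  using rcos_self[of a \<Phi>] subgroup.rcos_const[of \<Phi> G a] frattini_subgroup
  by (auto simp: \<pi>_def)

lemma \<pi>_eq_iff:
  assumes a: "a \<in> carrier G" and b: "b \<in> carrier G"
  shows "\<pi> a = \<pi> b \<longleftrightarrow> inv a \<otimes> b \<in> \<Phi>"
proof -
  interpret \<pi>: group_hom G Q \<pi> by (rule \<pi>_group_hom)
  have "\<pi> a = \<pi> b \<longleftrightarrow> inv\<^bsub>Q\<^esub> (\<pi> a) \<otimes>\<^bsub>Q\<^esub> \<pi> b = \<one>\<^bsub>Q\<^esub>"
    using a b by (metis \<pi>.H.inv_closed \<pi>.H.inv_equality \<pi>.H.inv_inv \<pi>.H.l_inv \<pi>.hom_closed)
  also have "\<dots> \<longleftrightarrow> \<pi> (inv a \<otimes> b) = \<one>\<^bsub>Q\<^esub>"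
    using a b by (metis \<pi>.hom_inv \<pi>.hom_mult inv_closed)
  also have "\<dots> \<longleftrightarrow> inv a \<otimes> b \<in> \<Phi>"
    by (rule \<pi>_eq_one_iff) (use a b in simp)
  finally show ?thesis .
qed

lemma quotient_comm_group: "comm_group Q"
proof -
  interpret \<pi>: group_hom G Q \<pi> by (rule \<pi>_group_hom)
  show ?thesis
  proof (rule \<pi>.H.group_comm_groupI)
    fix u v assume "u \<in> carrier Q" "v \<in> carrier Q"
    then obtain a b where a: "a \<in> carrier G" "u = \<pi> a" and b: "b \<in> carrier G" "v = \<pi> b"
      using \<pi>_surj by blast
    have "inv (a \<otimes> b) \<otimes> (b \<otimes> a) = inv b \<otimes> inv a \<otimes> inv (inv b) \<otimes> inv (inv a)"
      using a b by (simp add: inv_mult_group m_assoc)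
    also have "\<dots> \<in> derived_set G (carrier G)"
      by (rule UN_I[OF inv_closed[OF b(1)], OF UN_I[OF inv_closed[OF a(1)]]]) simp
    also have "\<dots> \<subseteq> \<Phi>"
      by (auto simp: frattini_def intro: generate.incl)
    finally have "\<pi> (a \<otimes> b) = \<pi> (b \<otimes> a)"
      using a b \<pi>_eq_iff[of "a \<otimes> b" "b \<otimes> a"] by blast
    then show "u \<otimes>\<^bsub>Q\<^esub> v = v \<otimes>\<^bsub>Q\<^esub> u"
      using a b by (metis \<pi>.hom_mult)
  qed
qed

text \<open>From here on \<open>Q\<close> is treated as an abstract group, not as a group of cosets.\<close>

declare one_FactGroup [simp del] mult_FactGroup [simp del]

sublocale Q: comm_group Q by (rule quotient_comm_group)

sublocale \<pi>: group_hom G Q \<pi> by (rule \<pi>_group_hom)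

lemma mem_\<pi>_iff:
  assumes w: "w \<in> carrier G"
  shows "c \<in> \<pi> w \<longleftrightarrow> c \<in> carrier G \<and> \<pi> c = \<pi> w"
  using w repr_independence[of c \<Phi> w] rcos_self[of c \<Phi>] r_coset_subset_G[of \<Phi> w]
    frattini_subgroup subgroup.subset
  unfolding \<pi>_def by blast

lemma card_\<pi>:
  assumes "w \<in> carrier G"
  shows "card (\<pi> w) = card \<Phi>"
proof -
  have "\<Phi> \<subseteq> carrier G" using frattini_subgroup subgroup.subset by blast
  moreover have "\<pi> w \<in> rcosets \<Phi>" using assms by (auto simp: \<pi>_def RCOSETS_def)
  ultimately show ?thesis using card_rcosets_equal by simp
qed

lemma quotient_pow_p:
  assumes "q \<in> carrier Q"
  shows "q [^]\<^bsub>Q\<^esub> p = \<one>\<^bsub>Q\<^esub>"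
proof -
  obtain a where a: "a \<in> carrier G" "q = \<pi> a" using \<pi>_surj[OF assms] by blast
  then have "a [^] p \<in> \<Phi>" by (auto simp: frattini_def intro: generate.incl)
  then show ?thesis using a \<pi>_eq_one_iff by (metis \<pi>.hom_nat_pow nat_pow_closed)
qed

lemma quotient_pow_mod: "q \<in> carrier Q \<Longrightarrow> q [^]\<^bsub>Q\<^esub> (n::nat) = q [^]\<^bsub>Q\<^esub> (n mod p)"
proof -
  assume q: "q \<in> carrier Q"
  have "q [^]\<^bsub>Q\<^esub> n = (q [^]\<^bsub>Q\<^esub> p) [^]\<^bsub>Q\<^esub> (n div p) \<otimes>\<^bsub>Q\<^esub> q [^]\<^bsub>Q\<^esub> (n mod p)"
    using Q.nat_pow_mult[OF q, of "p * (n div p)" "n mod p"] q by (simp add: Q.nat_pow_pow)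
  then show ?thesis using q by (simp add: quotient_pow_p)
qed

lemma quotient_inv_pow:
  assumes q: "q \<in> carrier Q"
  shows "inv\<^bsub>Q\<^esub> (q [^]\<^bsub>Q\<^esub> n) = q [^]\<^bsub>Q\<^esub> (n * (p - 1))"
proof (rule Q.inv_equality)
  have "n * (p - 1) + n = p * n"
    using prime_gt_1_nat[OF prime_p] by (cases p) (auto simp: algebra_simps)
  then have "q [^]\<^bsub>Q\<^esub> (n * (p - 1)) \<otimes>\<^bsub>Q\<^esub> q [^]\<^bsub>Q\<^esub> n = (q [^]\<^bsub>Q\<^esub> p) [^]\<^bsub>Q\<^esub> n"
    using q by (simp add: Q.nat_pow_mult Q.nat_pow_pow)
  then show "q [^]\<^bsub>Q\<^esub> (n * (p - 1)) \<otimes>\<^bsub>Q\<^esub> q [^]\<^bsub>Q\<^esub> n = \<one>\<^bsub>Q\<^esub>"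
    using q by (simp add: quotient_pow_p)
qed (use q in auto)

end

context p_group
begin

lemma endomorphism_\<pi>_cong:
  assumes \<sigma>: "\<sigma> \<in> hom G G" and a: "a \<in> carrier G" and b: "b \<in> carrier G" and eq: "\<pi> a = \<pi> b"
  shows "\<pi> (\<sigma> a) = \<pi> (\<sigma> b)"
proof -
  interpret \<sigma>: group_hom G G \<sigma> by unfold_locales (rule \<sigma>)
  have "inv a \<otimes> b \<in> \<Phi>" using eq a b by (simp add: \<pi>_eq_iff)
  then have "\<sigma> (inv a \<otimes> b) \<in> \<Phi>" by (rule endomorphism_frattini_closed[OF \<sigma>])
  then show ?thesis using a b by (simp add: \<pi>_eq_iff)
qed

lemma cyclic_if_quotient_cyclic:
  assumes x: "x \<in> carrier G" and y: "y \<in> carrier G" and gen: "generate G {x, y} = carrier G"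
    and y_pow: "\<pi> y = \<pi> x [^]\<^bsub>Q\<^esub> (c::nat)"
  shows "generate G {x} = carrier G"
proof -
  define T where "T = {a \<in> carrier G. \<exists>n::nat. \<pi> a = \<pi> x [^]\<^bsub>Q\<^esub> n}"
  have X: "\<pi> x \<in> carrier Q" using x by simp
  have "subgroup T G"
  proof
    show "a \<otimes> b \<in> T" if "a \<in> T" "b \<in> T" for a b
      using that X by (auto simp: T_def Q.nat_pow_mult)
    show "\<one> \<in> T" by (auto simp: T_def intro: exI[of _ 0])
    show "inv a \<in> T" if "a \<in> T" for a
      using that X by (auto simp: T_def quotient_inv_pow)
  qed (auto simp: T_def)
  moreover have "x \<in> T" "y \<in> T"
    using x y y_pow X by (auto simp: T_def intro: exI[of _ 1])
  ultimately have T: "carrier G \<subseteq> T"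
    using gen generate_subgroup_incl[of "{x, y}" T] by auto
  show ?thesis
  proof (rule frattini_nongenerating)
    show "subgroup (generate G {x}) G" using x by (intro generate_is_subgroup) auto
    fix w assume w: "w \<in> carrier G"
    then obtain n :: nat where n: "\<pi> w = \<pi> (x [^] n)" using T x by (auto simp: T_def \<pi>.hom_nat_pow)
    have "x [^] n \<in> generate G {x}"
      using generate_pow_on_finite_carrier[OF finite_carrier x] by auto
    moreover have "inv (x [^] n) \<otimes> w \<in> \<Phi>" using \<pi>_eq_iff[of "x [^] n" w] x w n by simp
    moreover have "w = x [^] n \<otimes> (inv (x [^] n) \<otimes> w)" using x w by (simp flip: m_assoc)
    ultimately show "\<exists>h \<in> generate G {x}. \<exists>f \<in> \<Phi>. w = h \<otimes> f" by blast
  qed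
qed

end

section \<open>Coordinates on the Frattini quotient\<close>

locale two_generated_p_group = p_group +
  fixes x y
  assumes x: "x \<in> carrier G" and y: "y \<in> carrier G"
    and generated: "generate G {x, y} = carrier G"
    and not_cyclic: "\<And>z. z \<in> carrier G \<Longrightarrow> generate G {z} \<noteq> carrier G"
begin

lemma quotient_generators_independent:
  assumes eq: "\<pi> x [^]\<^bsub>Q\<^esub> (i::nat) \<otimes>\<^bsub>Q\<^esub> \<pi> y [^]\<^bsub>Q\<^esub> (j::nat) = \<one>\<^bsub>Q\<^esub>"
  shows "p dvd j"
proof (rule ccontr)
  assume "\<not> p dvd j"
  then have "coprime j p" using prime_imp_coprime[OF prime_p] coprime_commute by blast
  moreover have "j \<noteq> 0" using \<open>\<not> p dvd j\<close> by (metis dvd_0_right)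
  ultimately obtain u v where uv: "j * u = p * v + 1" using bezout_nat[of j p] by auto
  have X: "\<pi> x \<in> carrier Q" and Y: "\<pi> y \<in> carrier Q" using x y by auto
  have "\<pi> y = (\<pi> y [^]\<^bsub>Q\<^esub> p) [^]\<^bsub>Q\<^esub> v \<otimes>\<^bsub>Q\<^esub> \<pi> y"
    using Y by (simp add: quotient_pow_p)
  also have "\<dots> = (\<pi> y [^]\<^bsub>Q\<^esub> j) [^]\<^bsub>Q\<^esub> u"
    using Y uv by (simp add: Q.nat_pow_pow flip: Q.nat_pow_mult)
  also have "\<dots> = inv\<^bsub>Q\<^esub> (\<pi> x [^]\<^bsub>Q\<^esub> i) [^]\<^bsub>Q\<^esub> u"
    using eq X Y by (metis Q.inv_equality Q.m_comm Q.nat_pow_closed)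
  also have "\<dots> = \<pi> x [^]\<^bsub>Q\<^esub> (i * (p - 1) * u)"
    using X by (simp add: quotient_inv_pow Q.nat_pow_pow)
  finally show False
    using cyclic_if_quotient_cyclic[OF x y generated] not_cyclic[OF x] by blast
qed

definition vec :: "int \<Rightarrow> int \<Rightarrow> 'a set" where
  "vec i j = \<pi> x [^]\<^bsub>Q\<^esub> nat (i mod int p) \<otimes>\<^bsub>Q\<^esub> \<pi> y [^]\<^bsub>Q\<^esub> nat (j mod int p)"

lemma p_pos: "int p > 0"
  using prime_gt_0_nat[OF prime_p] by simp

lemma vec_closed: "vec i j \<in> carrier Q"
  using x y by (simp add: vec_def)

lemma vec_cong: "[i = i'] (mod int p) \<Longrightarrow> [j = j'] (mod int p) \<Longrightarrow> vec i j = vec i' j'"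
  by (simp add: vec_def cong_def)

lemma vec_of_nat: "vec (int a) (int b) = \<pi> x [^]\<^bsub>Q\<^esub> a \<otimes>\<^bsub>Q\<^esub> \<pi> y [^]\<^bsub>Q\<^esub> b"
  using quotient_pow_mod[of "\<pi> x" a] quotient_pow_mod[of "\<pi> y" b] x y
  by (simp add: vec_def nat_mod_distrib)

lemma vec_mult: "vec i j \<otimes>\<^bsub>Q\<^esub> vec k l = vec (i + k) (j + l)"
proof -
  define a b c d where "a = nat (i mod int p)" and "b = nat (j mod int p)"
    and "c = nat (k mod int p)" and "d = nat (l mod int p)"
  have "vec i j \<otimes>\<^bsub>Q\<^esub> vec k l = \<pi> x [^]\<^bsub>Q\<^esub> (a + c) \<otimes>\<^bsub>Q\<^esub> \<pi> y [^]\<^bsub>Q\<^esub> (b + d)"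
    using x y by (simp add: vec_def a_def b_def c_def d_def Q.nat_pow_mult[symmetric] Q.m_ac)
  also have "\<dots> = vec (int (a + c)) (int (b + d))" by (rule vec_of_nat[symmetric])
  also have "\<dots> = vec (i + k) (j + l)"
    using p_pos by (intro vec_cong) (simp_all add: a_def b_def c_def d_def cong_def mod_add_eq)
  finally show ?thesis .
qed

lemma vec_zero: "vec 0 0 = \<one>\<^bsub>Q\<^esub>"
  using x y by (simp add: vec_def)

lemma vec_pow: "vec i j [^]\<^bsub>Q\<^esub> (n::nat) = vec (i * n) (j * n)"
  by (induction n) (simp_all add: vec_zero vec_mult algebra_simps)

lemma vec_inv: "inv\<^bsub>Q\<^esub> (vec i j) = vec (- i) (- j)"
  using vec_mult[of i j "- i" "- j"] vec_closed by (simp add: vec_zero Q.inv_equality Q.m_comm)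

lemma \<pi>_x: "\<pi> x = vec 1 0" and \<pi>_y: "\<pi> y = vec 0 1"
  using vec_of_nat[of 1 0] vec_of_nat[of 0 1] x y by simp_all

lemma vec_surj:
  assumes "a \<in> carrier G"
  shows "\<exists>i j. \<pi> a = vec i j"
proof -
  define T where "T = {a \<in> carrier G. \<exists>i j. \<pi> a = vec i j}"
  have "subgroup T G"
  proof
    show "u \<otimes> v \<in> T" if "u \<in> T" "v \<in> T" for u v
      using that by (fastforce simp: T_def vec_mult)
    show "inv u \<in> T" if "u \<in> T" for u
      using that by (fastforce simp: T_def vec_inv)
  qed (use vec_zero in \<open>auto simp: T_def\<close>)
  moreover have "x \<in> T" "y \<in> T"
    using x y \<pi>_x \<pi>_y by (auto simp: T_def)
  ultimately show ?thesis
    using assms generated generate_subgroup_incl[of "{x, y}" T] by (auto simp: T_def)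
qed

lemma vec_eq_one_iff: "vec i j = \<one>\<^bsub>Q\<^esub> \<longleftrightarrow> int p dvd i \<and> int p dvd j"
proof
  assume "int p dvd i \<and> int p dvd j"
  then show "vec i j = \<one>\<^bsub>Q\<^esub>" using vec_cong[of i 0 j 0] by (simp add: vec_zero cong_0_iff)
next
  interpret yx: two_generated_p_group G p y x
    using x y generated not_cyclic by unfold_locales (auto simp: insert_commute)
  define a b where "a = nat (i mod int p)" and "b = nat (j mod int p)"
  assume "vec i j = \<one>\<^bsub>Q\<^esub>"
  then have "\<pi> x [^]\<^bsub>Q\<^esub> a \<otimes>\<^bsub>Q\<^esub> \<pi> y [^]\<^bsub>Q\<^esub> b = \<one>\<^bsub>Q\<^esub>"
    by (simp add: vec_def a_def b_def)
  then have "p dvd b" and "p dvd a"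
    using quotient_generators_independent yx.quotient_generators_independent x y
    by (auto simp: Q.m_comm)
  moreover have "a < p" "b < p" using p_pos by (simp_all add: a_def b_def nat_less_iff)
  ultimately have "a = 0" "b = 0" using nat_dvd_not_less by (metis gr0I)+
  then show "int p dvd i \<and> int p dvd j"
    using pos_mod_sign[OF p_pos, of i] pos_mod_sign[OF p_pos, of j]
    by (auto simp: a_def b_def dvd_eq_mod_eq_0)
qed

lemma vec_eq_iff: "vec i j = vec k l \<longleftrightarrow> [i = k] (mod int p) \<and> [j = l] (mod int p)"
proof
  assume "vec i j = vec k l"
  then have "vec (i - k) (j - l) = \<one>\<^bsub>Q\<^esub>"
    using vec_mult[of i j "- k" "- l"] vec_mult[of k l "- k" "- l"] by (simp add: vec_zero)
  then show "[i = k] (mod int p) \<and> [j = l] (mod int p)"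
    by (simp add: vec_eq_one_iff cong_iff_dvd_diff)
next
  assume "[i = k] (mod int p) \<and> [j = l] (mod int p)"
  then show "vec i j = vec k l" by (intro vec_cong) auto
qed

lemma endomorphism_vec:
  assumes \<sigma>: "\<sigma> \<in> hom G G" and \<sigma>x: "\<pi> (\<sigma> x) = vec A B" and \<sigma>y: "\<pi> (\<sigma> y) = vec C D"
    and w: "w \<in> carrier G" and "\<pi> w = vec i j"
  shows "\<pi> (\<sigma> w) = vec (A * i + C * j) (B * i + D * j)"
proof -
  interpret \<sigma>: group_hom G G \<sigma> by unfold_locales (rule \<sigma>)
  define a b where "a = nat (i mod int p)" and "b = nat (j mod int p)"
  define w' where "w' = x [^] a \<otimes> y [^] b"
  have w': "w' \<in> carrier G" using x y by (simp add: w'_def)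
  have "\<pi> w' = vec (int a) (int b)" using x y by (simp add: w'_def vec_of_nat \<pi>.hom_nat_pow)
  also have "\<dots> = \<pi> w" using p_pos \<open>\<pi> w = vec i j\<close> by (simp add: a_def b_def vec_eq_iff cong_def)
  finally have "\<pi> (\<sigma> w) = \<pi> (\<sigma> w')" using endomorphism_\<pi>_cong[OF \<sigma> w w'] by simp
  also have "\<dots> = \<pi> (\<sigma> x) [^]\<^bsub>Q\<^esub> a \<otimes>\<^bsub>Q\<^esub> \<pi> (\<sigma> y) [^]\<^bsub>Q\<^esub> b"
    using x y by (simp add: w'_def \<pi>.hom_nat_pow \<sigma>.hom_nat_pow)
  also have "\<dots> = vec (A * a + C * b) (B * a + D * b)"
    by (simp add: \<sigma>x \<sigma>y vec_pow vec_mult ac_simps)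
  also have "\<dots> = vec (A * i + C * j) (B * i + D * j)"
  proof -
    have "[int a = i] (mod p)" "[int b = j] (mod p)" using p_pos by (simp_all add: a_def b_def cong_def)
    then show ?thesis by (simp only: vec_eq_iff) (intro conjI cong_add cong_mult; simp)
  qed
  finally show ?thesis .
qed

end

section \<open>Integer matrices modulo a prime\<close>

text \<open>Integer \<open>2 \<times> 2\<close> matrices, listed column by column: \<open>(a, b, c, d)\<close> has the columns
  \<open>(a, b)\<close> and \<open>(c, d)\<close>.\<close>

type_synonym imat = "int \<times> int \<times> int \<times> int"

fun imat_mult :: "imat \<Rightarrow> imat \<Rightarrow> imat" where
  "imat_mult (a, b, c, d) (a', b', c', d') =
     (a * a' + c * b', b * a' + d * b', a * c' + c * d', b * c' + d * d')"

definition imat_one :: imat where "imat_one = (1, 0, 0, 1)"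

fun imat_det :: "imat \<Rightarrow> int" where
  "imat_det (a, b, c, d) = a * d - c * b"

fun imat_cong :: "int \<Rightarrow> imat \<Rightarrow> imat \<Rightarrow> bool" where
  "imat_cong q (a, b, c, d) (a', b', c', d') \<longleftrightarrow>
     [a = a'] (mod q) \<and> [b = b'] (mod q) \<and> [c = c'] (mod q) \<and> [d = d'] (mod q)"

lemma imat_cong_refl [simp]: "imat_cong q M M"
  by (cases M) auto

lemma imat_cong_sym: "imat_cong q M N \<Longrightarrow> imat_cong q N M"
  by (cases M; cases N) (auto simp: cong_sym)

lemma imat_cong_trans [trans]: "imat_cong q M N \<Longrightarrow> imat_cong q N K \<Longrightarrow> imat_cong q M K"
  by (cases M; cases N; cases K) (auto intro: cong_trans)

lemma imat_mult_cong:
  "imat_cong q M M' \<Longrightarrow> imat_cong q N N' \<Longrightarrow> imat_cong q (imat_mult M N) (imat_mult M' N')"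
  by (cases M; cases M'; cases N; cases N') (auto intro!: cong_add cong_mult)

lemma imat_det_cong: "imat_cong q M M' \<Longrightarrow> [imat_det M = imat_det M'] (mod q)"
  by (cases M; cases M') (auto intro!: cong_diff cong_mult)

lemma imat_mult_assoc: "imat_mult (imat_mult M N) K = imat_mult M (imat_mult N K)"
  by (cases M; cases N; cases K) (simp add: algebra_simps)

lemma imat_mult_one [simp]: "imat_mult imat_one M = M" "imat_mult M imat_one = M"
  by (cases M; simp add: imat_one_def)+

lemma imat_det_mult: "imat_det (imat_mult M N) = imat_det M * imat_det N"
  by (cases M; cases N) (simp add: algebra_simps)

lemma imat_det_one [simp]: "imat_det imat_one = 1"
  by (simp add: imat_one_def)

text \<open>Modulo an odd prime \<open>q\<close>, an involution of determinant \<open>1\<close> whose trace \<open>a + d\<close> is a unit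
  is diagonal, hence \<open>\<plusminus>1\<close>; trace \<open>0\<close> is impossible, as it would give \<open>M\<^sup>2 = -1\<close>.\<close>

lemma imat_involution:
  fixes q :: int
  assumes q: "Factorial_Ring.prime q" and odd: "q \<noteq> 2"
    and square: "imat_cong q (imat_mult M M) imat_one" and det: "[imat_det M = 1] (mod q)"
  shows "imat_cong q M imat_one \<or> imat_cong q M (- 1, 0, 0, - 1)"
proof -
  obtain a b c d where M: "M = (a, b, c, d)" by (cases M) auto
  have h1: "q dvd a * a + c * b - 1" and h2: "q dvd b * (a + d)"
    and h3: "q dvd c * (a + d)" and h4: "q dvd b * c + d * d - 1"
    using square by (auto simp: M imat_one_def cong_iff_dvd_diff algebra_simps)
  have h5: "q dvd a * d - c * b - 1" using det by (simp add: M cong_iff_dvd_diff)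
  have s1: "q dvd a * (a + d) - 2"
    using dvd_add[OF h1 h5] by (simp add: algebra_simps)
  have s2: "q dvd d * (a + d) - 2"
    using dvd_add[OF h4 h5] by (simp add: algebra_simps)
  have trace: "\<not> q dvd a + d"
  proof
    assume "q dvd a + d"
    then have "q dvd 2" using s1 by (metis dvd_diff_right_iff dvd_mult)
    then show False
      using q odd prime_ge_2_int[OF q] by (auto dest: zdvd_imp_le)
  qed
  have bc: "q dvd b" "q dvd c"
    using h2 h3 trace q by (auto simp: prime_dvd_mult_iff)
  have "q dvd (a - d) * (a + d)"
    using dvd_diff[OF s1 s2] by (simp add: algebra_simps)
  then have ad: "q dvd a - d" using trace q by (simp add: prime_dvd_mult_iff)
  have "q dvd (a - 1) * (a + 1)"
    using dvd_diff[OF h1 dvd_mult2[OF bc(2), of b]] by (simp add: algebra_simps)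
  then have "q dvd a - 1 \<or> q dvd a + 1" using q by (simp add: prime_dvd_mult_iff)
  then show ?thesis
  proof
    assume "q dvd a - 1"
    moreover from this have "q dvd (a - 1) - (a - d)" using ad by (rule dvd_diff)
    ultimately show ?thesis using bc by (simp add: M imat_one_def cong_iff_dvd_diff)
  next
    assume "q dvd a + 1"
    moreover from this have "q dvd (a + 1) - (a - d)" using ad by (rule dvd_diff)
    ultimately show ?thesis using bc by (simp add: M cong_iff_dvd_diff add.commute)
  qed
qed

lemma imat_conj_neg_one: "imat_mult (imat_mult (- 1, 0, 0, - 1) M) (- 1, 0, 0, - 1) = M"
  by (cases M) simp

text \<open>Reduced modulo \<open>2\<close>, an invertible integer matrix permutes the three nonzero vectors of
  \<open>(\<int>/2)\<^sup>2\<close>, and \<open>imat_sign2\<close> is the parity of that permutation. Its kernel, the alternating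
  group of degree \<open>3\<close>, is abelian.\<close>

fun imat_sign2 :: "imat \<Rightarrow> int" where
  "imat_sign2 (a, b, c, d) = b + c + b * c * (a + d + 1)"

lemma imat_sign2_cong: "imat_cong 2 M M' \<Longrightarrow> [imat_sign2 M = imat_sign2 M'] (mod 2)"
  by (cases M; cases M') (auto intro!: cong_add cong_mult)

lemma cong_2_iff: "[x = y] (mod 2) \<longleftrightarrow> (even x \<longleftrightarrow> even (y::int))"
  by (auto simp: cong_iff_dvd_diff)

lemma imat_sign2_mult:
  assumes "odd (imat_det M)" "odd (imat_det N)"
  shows "[imat_sign2 (imat_mult M N) = imat_sign2 M + imat_sign2 N] (mod 2)"
proof -
  obtain a b c d e f g h where "M = (a, b, c, d)" "N = (e, f, g, h)" by (cases M; cases N) auto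
  then show ?thesis using assms unfolding cong_2_iff
    by (simp only: imat_det.simps imat_sign2.simps imat_mult.simps even_add even_diff even_mult_iff)
       (cases "even a"; cases "even b"; cases "even c"; cases "even d";
        cases "even e"; cases "even f"; cases "even g"; cases "even h"; simp)
qed

lemma imat_even_sign2_commute:
  assumes "even (imat_sign2 M)" "odd (imat_det M)" "even (imat_sign2 N)" "odd (imat_det N)"
  shows "imat_cong 2 (imat_mult M N) (imat_mult N M)"
proof -
  obtain a b c d e f g h where "M = (a, b, c, d)" "N = (e, f, g, h)" by (cases M; cases N) auto
  then show ?thesis using assms
    by (simp only: imat_det.simps imat_sign2.simps imat_mult.simps imat_cong.simps cong_2_iff
          even_add even_diff even_mult_iff)
       (cases "even a"; cases "even b"; cases "even c"; cases "even d";
        cases "even e"; cases "even f"; cases "even g"; cases "even h"; simp)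
qed

section \<open>Simple groups\<close>

lemma (in group) commutator_eq_one_iff:
  assumes "a \<in> carrier G" "b \<in> carrier G"
  shows "a \<otimes> b \<otimes> inv a \<otimes> inv b = \<one> \<longleftrightarrow> a \<otimes> b = b \<otimes> a"
proof -
  have "a \<otimes> b \<otimes> inv a \<otimes> inv b = a \<otimes> b \<otimes> inv (b \<otimes> a)"
    using assms by (simp add: inv_mult_group m_assoc)
  then show ?thesis using assms by (simp add: inv_solve_right')
qed

lemma simple_group_perfect:
  fixes G (structure)
  assumes simple: "simple_group G" and non_comm: "\<not> comm_group G"
  shows "derived G (carrier G) = carrier G"
proof -
  interpret simple_group G by (rule simple)
  have "derived G (carrier G) = carrier G \<or> derived G (carrier G) = {\<one>}"
    by (rule no_real_normal_subgroup[OF derived_self_is_normal])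
  moreover have "derived G (carrier G) \<noteq> {\<one>}"
  proof
    assume trivial: "derived G (carrier G) = {\<one>}"
    have "comm_group G"
    proof (rule group_comm_groupI)
      fix a b assume a: "a \<in> carrier G" and b: "b \<in> carrier G"
      have "a \<otimes> b \<otimes> inv a \<otimes> inv b \<in> derived G (carrier G)"
        using a b by (auto simp: derived_def intro!: generate.incl)
      then have "a \<otimes> b \<otimes> inv a \<otimes> inv b = \<one>" using trivial by blast
      then show "a \<otimes> b = b \<otimes> a" using a b by (simp add: commutator_eq_one_iff)
    qed
    then show False using non_comm by simp
  qed
  ultimately show ?thesis by blast
qed

lemma subgroup_containing_commutators_eq_carrier:
  fixes G (structure)
  assumes simple: "simple_group G" and non_comm: "\<not> comm_group G" and H: "subgroup H G"
    and commutators: "\<And>a b. a \<in> carrier G \<Longrightarrow> b \<in> carrier G \<Longrightarrow> a \<otimes> b \<otimes> inv a \<otimes> inv b \<in> H"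
  shows "H = carrier G"
proof -
  interpret simple_group G by (rule simple)
  have "derived G (carrier G) \<subseteq> H"
    unfolding derived_def by (rule generate_subgroup_incl[OF _ H]) (auto intro: commutators)
  then show ?thesis
    using simple_group_perfect[OF simple non_comm] subgroup.subset[OF H] by blast
qed

lemma hom_to_comm_monoid_constant:
  fixes G (structure)
  assumes simple: "simple_group G" and non_comm: "\<not> comm_group G"
    and h: "h \<in> hom G M" and M: "comm_monoid M" and g: "g \<in> carrier G"
  shows "h g = h \<one>"
proof -
  interpret simple_group G by (rule simple)
  interpret M: comm_monoid M by (rule M)
  have hom_mult: "h (a \<otimes> b) = h a \<otimes>\<^bsub>M\<^esub> h b" if "a \<in> carrier G" "b \<in> carrier G" for a b
    using h that by (simp add: hom_mult)
  have closed: "h a \<in> carrier M" if "a \<in> carrier G" for a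
    using h that by (simp add: hom_in_carrier)
  have inv_cancel: "h a \<otimes>\<^bsub>M\<^esub> h (inv a) = h \<one>" if "a \<in> carrier G" for a
    using that by (simp flip: hom_mult)
  define H where "H = {a \<in> carrier G. h a = h \<one>}"
  have "subgroup H G"
  proof (rule subgroupI)
    show "inv a \<in> H" if "a \<in> H" for a
    proof -
      have "h (inv a) = h (inv a \<otimes> \<one>)" using that by (simp add: H_def)
      also have "\<dots> = h (inv a) \<otimes>\<^bsub>M\<^esub> h a" using that hom_mult[of "inv a" \<one>] by (simp add: H_def)
      also have "\<dots> = h \<one>"
        using that inv_cancel[of a] M.m_comm[OF closed closed, of "inv a" a] by (simp add: H_def)
      finally show ?thesis using that by (simp add: H_def)
    qed
    show "a \<otimes> b \<in> H" if "a \<in> H" "b \<in> H" for a b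
      using that hom_mult[of \<one> \<one>] by (simp add: H_def hom_mult)
  qed (auto simp: H_def)
  moreover have "a \<otimes> b \<otimes> inv a \<otimes> inv b \<in> H" if "a \<in> carrier G" "b \<in> carrier G" for a b
  proof -
    have "h (a \<otimes> b \<otimes> inv a \<otimes> inv b) = (h a \<otimes>\<^bsub>M\<^esub> h (inv a)) \<otimes>\<^bsub>M\<^esub> (h b \<otimes>\<^bsub>M\<^esub> h (inv b))"
      using that closed by (simp add: hom_mult M.m_ac)
    also have "\<dots> = h (\<one> \<otimes> \<one>)" using that hom_mult[of \<one> \<one>] by (simp add: inv_cancel)
    finally show ?thesis using that by (simp add: H_def)
  qed
  ultimately have "H = carrier G"
    by (rule subgroup_containing_commutators_eq_carrier[OF simple non_comm])
  then show ?thesis using g by (auto simp: H_def)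
qed

text \<open>The centre is the kernel of the action by conjugation.\<close>

lemma central_element_of_simple_group:
  fixes G (structure)
  assumes simple: "simple_group G" and non_comm: "\<not> comm_group G"
    and z: "z \<in> carrier G" and central: "\<And>g. g \<in> carrier G \<Longrightarrow> z \<otimes> g = g \<otimes> z"
  shows "z = \<one>"
proof -
  interpret simple_group G by (rule simple)
  define conj where "conj = (\<lambda>g. \<lambda>h \<in> carrier G. g \<otimes> h \<otimes> inv g)"
  interpret conj: group_hom G "BijGroup (carrier G)" conj
    unfolding conj_def using action_by_conjugation by (simp add: group_action_def)
  have in_kernel: "g \<in> kernel G (BijGroup (carrier G)) conj \<longleftrightarrow>
      (\<forall>h \<in> carrier G. g \<otimes> h \<otimes> inv g = h)" if "g \<in> carrier G" for g
    using that by (auto simp: kernel_def conj_def BijGroup_def fun_eq_iff restrict_def)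
  have "kernel G (BijGroup (carrier G)) conj \<noteq> carrier G"
  proof
    assume "kernel G (BijGroup (carrier G)) conj = carrier G"
    then have "comm_group G"
      using in_kernel by (intro group_comm_groupI) (metis inv_solve_right' m_closed)
    then show False using non_comm by simp
  qed
  then have "kernel G (BijGroup (carrier G)) conj = {\<one>}"
    using no_real_normal_subgroup[OF conj.normal_kernel] by blast
  moreover have "z \<in> kernel G (BijGroup (carrier G)) conj"
    using z central by (simp add: in_kernel m_assoc)
  ultimately show ?thesis by blast
qed

section \<open>Groups acting on \<open>p\<close>-groups\<close>

lemma (in group_action) normal_subgroup_acting_trivially_on_classes:
  assumes compat: "\<And>g a b. g \<in> carrier G \<Longrightarrow> a \<in> E \<Longrightarrow> b \<in> E \<Longrightarrow> f a = f b \<Longrightarrow>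
                     f (\<phi> g a) = f (\<phi> g b)"
  shows "{g \<in> carrier G. \<forall>x \<in> E. f (\<phi> g x) = f x} \<lhd> G"
proof -
  interpret group G using group_hom group_hom.axioms(1) by auto
  define N where "N = {g \<in> carrier G. \<forall>x \<in> E. f (\<phi> g x) = f x}"
  have in_E: "\<phi> g x \<in> E" if "g \<in> carrier G" "x \<in> E" for g x
    using element_image that by blast
  have "subgroup N G"
  proof (rule subgroupI)
    show "inv g \<in> N" if "g \<in> N" for g
    proof -
      have "f (\<phi> (inv g) x) = f x" if x: "x \<in> E" for x
        using \<open>g \<in> N\<close> in_E[of "inv g" x] x orbit_sym_aux[of g "\<phi> (inv g) x" x]
          orbit_sym_aux[of "inv g" x]
        by (auto simp: N_def)
      then show ?thesis using that by (simp add: N_def)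
    qed
    show "g \<otimes> h \<in> N" if "g \<in> N" "h \<in> N" for g h
      using that by (auto simp: N_def composition_rule in_E)
    have "\<phi> \<one> x = x" if "x \<in> E" for x
      using id_eq_one that by (metis restrict_apply')
    then show "N \<noteq> {}" by (auto simp: N_def)
  qed (auto simp: N_def)
  then have "N \<lhd> G"
  proof (rule normal_invI)
    fix g n assume g: "g \<in> carrier G" and n: "n \<in> N"
    have "f (\<phi> (g \<otimes> n \<otimes> inv g) x) = f x" if x: "x \<in> E" for x
    proof -
      define u where "u = \<phi> (inv g) x"
      have u: "u \<in> E" and gu: "\<phi> g u = x"
        using g x in_E orbit_sym_aux[of "inv g" x u] by (auto simp: u_def)
      have nG: "n \<in> carrier G" using n by (simp add: N_def)
      have "f (\<phi> g (\<phi> n u)) = f (\<phi> g u)"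
        using n u g in_E by (intro compat) (auto simp: N_def)
      moreover have "\<phi> (g \<otimes> n \<otimes> inv g) x = \<phi> g (\<phi> n u)"
        using g nG x u by (simp add: composition_rule u_def in_E)
      ultimately show ?thesis by (simp add: gu)
    qed
    then show "g \<otimes> n \<otimes> inv g \<in> N" using g n by (simp add: N_def)
  qed
  then show ?thesis by (simp add: N_def)
qed

lemma (in group) automorphisms_of_cyclic_group_commute:
  assumes z: "z \<in> carrier G" and cyclic: "generate G {z} = carrier G"
    and \<sigma>: "\<sigma> \<in> hom G G" and \<tau>: "\<tau> \<in> hom G G" and w: "w \<in> carrier G"
  shows "\<sigma> (\<tau> w) = \<tau> (\<sigma> w)"
proof -
  interpret \<sigma>: group_hom G G \<sigma> by unfold_locales (rule \<sigma>)
  interpret \<tau>: group_hom G G \<tau> by unfold_locales (rule \<tau>)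
  have power: "\<exists>k::int. v = z [^] k" if "v \<in> carrier G" for v
    using that cyclic generate_pow[OF z] by auto
  obtain a b k :: int where "\<sigma> z = z [^] a" "\<tau> z = z [^] b" "w = z [^] k"
    using power z w by (meson \<sigma>.hom_closed \<tau>.hom_closed)
  then show ?thesis
    using z by (simp add: \<sigma>.hom_int_pow \<tau>.hom_int_pow int_pow_pow ac_simps)
qed

locale p_group_action = p_group P p for P (structure) and p +
  fixes G :: "('c, 'd) monoid_scheme" and \<phi>
  assumes group_G: "group G" and action_hom: "\<phi> \<in> hom G (AutoGroup P)"
begin

lemma action_auto: "g \<in> carrier G \<Longrightarrow> \<phi> g \<in> auto P"
  using action_hom by (auto simp: hom_def AutoGroup_def)

lemma action_endomorphism: "g \<in> carrier G \<Longrightarrow> \<phi> g \<in> hom P P"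
  using action_auto by (simp add: auto_def)

sublocale action: group_action G "carrier P" \<phi>
  unfolding group_action_def group_hom_def group_hom_axioms_def
  using group_G group_BijGroup action_hom
  by (auto simp: hom_def AutoGroup_def BijGroup_def auto_def)

lemma action_closed [simp]: "g \<in> carrier G \<Longrightarrow> w \<in> carrier P \<Longrightarrow> \<phi> g w \<in> carrier P"
  using action.element_image by blast

definition action_kernel where
  "action_kernel = {g \<in> carrier G. \<forall>w \<in> carrier P. \<phi> g w = w}"

definition quotient_action_kernel where
  "quotient_action_kernel = {g \<in> carrier G. \<forall>w \<in> carrier P. \<pi> (\<phi> g w) = \<pi> w}"

lemma action_kernel_normal: "action_kernel \<lhd> G"
  unfolding action_kernel_def
  using action.normal_subgroup_acting_trivially_on_classes[of "\<lambda>w. w"] by simp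

lemma quotient_action_kernel_normal: "quotient_action_kernel \<lhd> G"
  unfolding quotient_action_kernel_def
  by (rule action.normal_subgroup_acting_trivially_on_classes)
     (use action_endomorphism endomorphism_\<pi>_cong in blast)

lemma commutator_in_action_kernel_if_cyclic:
  assumes z: "z \<in> carrier P" and cyclic: "generate P {z} = carrier P"
    and g: "g \<in> carrier G" and h: "h \<in> carrier G"
  shows "g \<otimes>\<^bsub>G\<^esub> h \<otimes>\<^bsub>G\<^esub> inv\<^bsub>G\<^esub> g \<otimes>\<^bsub>G\<^esub> inv\<^bsub>G\<^esub> h \<in> action_kernel"
proof -
  interpret G: group G by (rule group_G)
  interpret A: group "AutoGroup P" by (rule AutoGroup)
  interpret \<phi>: group_hom G "AutoGroup P" \<phi> by unfold_locales (rule action_hom)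
  have "\<phi> g \<otimes>\<^bsub>AutoGroup P\<^esub> \<phi> h = \<phi> h \<otimes>\<^bsub>AutoGroup P\<^esub> \<phi> g"
    using g h automorphisms_of_cyclic_group_commute[OF z cyclic action_endomorphism action_endomorphism]
    by (auto simp: AutoGroup_def BijGroup_def compose_def fun_eq_iff action.bij_prop0)
  then have "\<phi> (g \<otimes>\<^bsub>G\<^esub> h \<otimes>\<^bsub>G\<^esub> inv\<^bsub>G\<^esub> g \<otimes>\<^bsub>G\<^esub> inv\<^bsub>G\<^esub> h) = \<one>\<^bsub>AutoGroup P\<^esub>"
    using g h by (simp add: A.m_assoc A.inv_mult_group[symmetric] A.r_inv)
  then show ?thesis
    using g h by (auto simp: action_kernel_def AutoGroup_def BijGroup_def fun_eq_iff)
qed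

lemma action_kernel_eq_carrier_if_cyclic:
  assumes simple: "simple_group G" and non_comm: "\<not> comm_group G"
    and "z \<in> carrier P" and "generate P {z} = carrier P"
  shows "action_kernel = carrier G"
  using subgroup_containing_commutators_eq_carrier[OF simple non_comm
      normal_imp_subgroup[OF action_kernel_normal]]
    commutator_in_action_kernel_if_cyclic[OF assms(3,4)] by blast

text \<open>An element \<open>r\<close> of prime order \<open>q \<noteq> p\<close> acting trivially on \<open>P/\<Phi>\<close> permutes each coset
  of \<open>\<Phi>\<close>, a set of \<open>p\<close>-power size, so it fixes a point of each coset. The fixed points
  of \<open>r\<close> form a subgroup which together with \<open>\<Phi>\<close> generates \<open>P\<close>.\<close>

lemma fixed_point_in_coset:
  assumes q: "Factorial_Ring.prime q" and qp: "q \<noteq> p" and r: "r \<in> carrier G" "r \<noteq> \<one>\<^bsub>G\<^esub>"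
    and order: "r [^]\<^bsub>G\<^esub> q = \<one>\<^bsub>G\<^esub>" and trivial: "r \<in> quotient_action_kernel"
    and w: "w \<in> carrier P"
  shows "\<exists>c \<in> \<pi> w. \<phi> r c = c"
proof (rule ccontr)
  assume no_fixed: "\<not> ?thesis"
  interpret G: group G by (rule group_G)
  define R where "R = generate G {r}"
  have R: "subgroup R G" unfolding R_def using r by (intro G.generate_is_subgroup) auto
  have "G.ord r dvd q" using G.pow_eq_id[OF r(1)] order by simp
  then have "G.ord r = q" using G.ord_eq_1[OF r(1)] r(2) q by (auto simp: prime_nat_iff)
  then have order_R: "order (G\<lparr>carrier := R\<rparr>) = q ^ 1"
    using G.generate_pow_card[OF r(1)] by (simp add: R_def order_def)
  have R_trivial: "R \<subseteq> quotient_action_kernel"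
    unfolding R_def using trivial normal_imp_subgroup[OF quotient_action_kernel_normal]
    by (intro G.generate_subgroup_incl) auto
  have "q dvd card (\<pi> w - {c \<in> \<pi> w. \<forall>h \<in> carrier (G\<lparr>carrier := R\<rparr>). \<phi> h c = c})"
  proof (rule prime_dvd_card_non_fixed_points'[OF G.subgroup_imp_group[OF R] q order_R])
    show "finite (\<pi> w)"
      by (rule finite_subset[OF _ finite_carrier]) (use w in \<open>auto simp: mem_\<pi>_iff\<close>)
    show "\<phi> h c \<in> \<pi> w" if "h \<in> carrier (G\<lparr>carrier := R\<rparr>)" "c \<in> \<pi> w" for h c
      using that R_trivial w by (auto simp: mem_\<pi>_iff quotient_action_kernel_def)
    show "\<phi> \<one>\<^bsub>G\<lparr>carrier := R\<rparr>\<^esub> c = c" if "c \<in> \<pi> w" for c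
      using that w action.id_eq_one by (auto simp: mem_\<pi>_iff) (metis restrict_apply')
    show "\<phi> (g \<otimes>\<^bsub>G\<lparr>carrier := R\<rparr>\<^esub> h) c = \<phi> g (\<phi> h c)"
      if "g \<in> carrier (G\<lparr>carrier := R\<rparr>)" "h \<in> carrier (G\<lparr>carrier := R\<rparr>)" "c \<in> \<pi> w" for g h c
      using that w subgroup.subset[OF R] by (auto simp: mem_\<pi>_iff intro!: action.composition_rule)
  qed
  moreover have "{c \<in> \<pi> w. \<forall>h \<in> carrier (G\<lparr>carrier := R\<rparr>). \<phi> h c = c} = {}"
    using no_fixed by (auto simp: R_def generate.incl)
  ultimately have "q dvd card (\<pi> w)" by (metis Diff_empty)
  then have "q dvd card \<Phi>" using card_\<pi>[OF w] by simp
  moreover obtain k where "card \<Phi> = p ^ k"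
    using card_subgroup_prime_power[OF frattini_subgroup] by blast
  ultimately have "q dvd p" using q prime_dvd_power_nat by simp
  then show False using q qp prime_p by (simp add: primes_dvd_imp_eq)
qed

lemma coprime_element_acts_trivially:
  assumes q: "Factorial_Ring.prime q" and qp: "q \<noteq> p" and r: "r \<in> carrier G"
    and order: "r [^]\<^bsub>G\<^esub> q = \<one>\<^bsub>G\<^esub>" and trivial: "r \<in> quotient_action_kernel"
  shows "r \<in> action_kernel"
proof (cases "r = \<one>\<^bsub>G\<^esub>")
  case True
  then show ?thesis using normal_imp_subgroup[OF action_kernel_normal] subgroup.one_closed by blast
next
  case False
  interpret \<phi>r: group_hom P P "\<phi> r" by unfold_locales (rule action_endomorphism[OF r])
  define F where "F = {c \<in> carrier P. \<phi> r c = c}"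
  have "subgroup F P" by (rule subgroupI) (auto simp: F_def)
  then have "F = carrier P"
  proof (rule frattini_nongenerating)
    fix w assume w: "w \<in> carrier P"
    obtain c where c: "c \<in> \<pi> w" "\<phi> r c = c"
      using fixed_point_in_coset[OF q qp r False order trivial w] by blast
    then have "c \<in> carrier P" "inv c \<otimes> w \<in> \<Phi>"
      using w by (auto simp: mem_\<pi>_iff \<pi>_eq_iff)
    moreover have "w = c \<otimes> (inv c \<otimes> w)" using w \<open>c \<in> carrier P\<close> by (simp flip: m_assoc)
    ultimately show "\<exists>h \<in> F. \<exists>f \<in> \<Phi>. w = h \<otimes> f" using c by (auto simp: F_def)
  qed
  then show ?thesis using r by (auto simp: action_kernel_def F_def)
qed

end

locale two_generated_action = p_group_action P p G \<phi> + two_generated_p_group P p x y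
  for P :: "('a, 'b) monoid_scheme" (structure) and p G \<phi> x y
begin

text \<open>The entries are only determined modulo \<open>p\<close>; \<open>SOME\<close> picks arbitrary representatives.\<close>

definition action_matrix :: "'c \<Rightarrow> imat" where
  "action_matrix g = (SOME (A, B, C, D). \<pi> (\<phi> g x) = vec A B \<and> \<pi> (\<phi> g y) = vec C D)"

lemma action_matrix_columns:
  assumes g: "g \<in> carrier G" and M: "action_matrix g = (A, B, C, D)"
  shows "\<pi> (\<phi> g x) = vec A B" and "\<pi> (\<phi> g y) = vec C D"
proof -
  obtain A' B' C' D' where "\<pi> (\<phi> g x) = vec A' B'" "\<pi> (\<phi> g y) = vec C' D'"
    using vec_surj g x y by (meson action_closed)
  then have "\<exists>M. case M of (A, B, C, D) \<Rightarrow> \<pi> (\<phi> g x) = vec A B \<and> \<pi> (\<phi> g y) = vec C D"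
    by auto
  from someI_ex[OF this] show "\<pi> (\<phi> g x) = vec A B" "\<pi> (\<phi> g y) = vec C D"
    using M by (simp_all add: action_matrix_def)
qed

lemma action_matrix_vec:
  assumes g: "g \<in> carrier G" and M: "action_matrix g = (A, B, C, D)"
    and w: "w \<in> carrier P" and "\<pi> w = vec i j"
  shows "\<pi> (\<phi> g w) = vec (A * i + C * j) (B * i + D * j)"
  using endomorphism_vec[OF action_endomorphism[OF g] action_matrix_columns[OF g M]] assms by blast

lemma action_matrix_mult:
  assumes g: "g \<in> carrier G" and h: "h \<in> carrier G"
  shows "imat_cong p (action_matrix (g \<otimes>\<^bsub>G\<^esub> h)) (imat_mult (action_matrix g) (action_matrix h))"
proof -
  interpret G: group G by (rule group_G)
  obtain A B C D where Mg: "action_matrix g = (A, B, C, D)" by (cases "action_matrix g") auto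
  obtain A' B' C' D' where Mh: "action_matrix h = (A', B', C', D')" by (cases "action_matrix h") auto
  obtain A'' B'' C'' D'' where Mgh: "action_matrix (g \<otimes>\<^bsub>G\<^esub> h) = (A'', B'', C'', D'')"
    by (cases "action_matrix (g \<otimes>\<^bsub>G\<^esub> h)") auto
  have "\<pi> (\<phi> (g \<otimes>\<^bsub>G\<^esub> h) v) = \<pi> (\<phi> g (\<phi> h v))" if "v \<in> carrier P" for v
    using that g h by (simp add: action.composition_rule)
  then have "vec A'' B'' = vec (A * A' + C * B') (B * A' + D * B')"
    and "vec C'' D'' = vec (A * C' + C * D') (B * C' + D * D')"
    using action_matrix_columns[OF G.m_closed[OF g h] Mgh] action_matrix_columns[OF h Mh]
      action_matrix_vec[OF g Mg] x y
    by (metis action_closed h)+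
  then show ?thesis by (simp add: Mg Mh Mgh vec_eq_iff)
qed

lemma action_matrix_one: "imat_cong p (action_matrix \<one>\<^bsub>G\<^esub>) imat_one"
proof -
  interpret G: group G by (rule group_G)
  obtain A B C D where M: "action_matrix \<one>\<^bsub>G\<^esub> = (A, B, C, D)" by (cases "action_matrix \<one>\<^bsub>G\<^esub>") auto
  have "\<phi> \<one>\<^bsub>G\<^esub> v = v" if "v \<in> carrier P" for v
    using that action.id_eq_one by (metis restrict_apply')
  then have "vec A B = vec 1 0" "vec C D = vec 0 1"
    using action_matrix_columns[OF G.one_closed M] x y \<pi>_x \<pi>_y by auto
  then show ?thesis by (simp add: M imat_one_def vec_eq_iff)
qed

lemma action_matrix_inverse:
  assumes g: "g \<in> carrier G"
  shows "imat_cong p (imat_mult (action_matrix g) (action_matrix (inv\<^bsub>G\<^esub> g))) imat_one"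
proof -
  interpret G: group G by (rule group_G)
  have "imat_cong p (imat_mult (action_matrix g) (action_matrix (inv\<^bsub>G\<^esub> g)))
      (action_matrix (g \<otimes>\<^bsub>G\<^esub> inv\<^bsub>G\<^esub> g))"
    by (rule imat_cong_sym[OF action_matrix_mult]) (use g in auto)
  then show ?thesis using g action_matrix_one by (auto intro: imat_cong_trans)
qed

lemma action_matrix_commutator:
  assumes g: "g \<in> carrier G" and h: "h \<in> carrier G"
  shows "imat_cong p (action_matrix (g \<otimes>\<^bsub>G\<^esub> h \<otimes>\<^bsub>G\<^esub> inv\<^bsub>G\<^esub> g \<otimes>\<^bsub>G\<^esub> inv\<^bsub>G\<^esub> h))
    (imat_mult (imat_mult (imat_mult (action_matrix g) (action_matrix h))
       (action_matrix (inv\<^bsub>G\<^esub> g))) (action_matrix (inv\<^bsub>G\<^esub> h)))"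
proof -
  interpret G: group G by (rule group_G)
  have step: "imat_cong p (action_matrix (a \<otimes>\<^bsub>G\<^esub> b)) (imat_mult M (action_matrix b))"
    if "a \<in> carrier G" "b \<in> carrier G" "imat_cong p (action_matrix a) M" for a b M
    using that by (meson action_matrix_mult imat_cong_refl imat_cong_trans imat_mult_cong)
  show ?thesis
    using g h by (intro step) (auto intro: step action_matrix_mult)
qed

lemma quotient_action_kernel_iff:
  assumes g: "g \<in> carrier G"
  shows "g \<in> quotient_action_kernel \<longleftrightarrow> imat_cong p (action_matrix g) imat_one"
proof -
  obtain A B C D where M: "action_matrix g = (A, B, C, D)" by (cases "action_matrix g") auto
  show ?thesis
  proof
    assume "g \<in> quotient_action_kernel"
    then have "vec A B = vec 1 0" "vec C D = vec 0 1"
      using action_matrix_columns[OF g M] x y \<pi>_x \<pi>_y by (auto simp: quotient_action_kernel_def)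
    then show "imat_cong p (action_matrix g) imat_one" by (simp add: M imat_one_def vec_eq_iff)
  next
    assume one: "imat_cong p (action_matrix g) imat_one"
    have "\<pi> (\<phi> g w) = \<pi> w" if w: "w \<in> carrier P" for w
    proof -
      obtain i j where ij: "\<pi> w = vec i j" using vec_surj[OF w] by blast
      have "\<pi> (\<phi> g w) = vec (A * i + C * j) (B * i + D * j)" by (rule action_matrix_vec[OF g M w ij])
      also have "\<dots> = vec (1 * i + 0 * j) (0 * i + 1 * j)"
        using one by (intro vec_cong cong_add cong_mult) (auto simp: M imat_one_def)
      finally show ?thesis using ij by simp
    qed
    then show "g \<in> quotient_action_kernel" using g by (simp add: quotient_action_kernel_def)
  qed
qed

lemma det_action_matrix:
  assumes simple: "simple_group G" and non_comm: "\<not> comm_group G" and g: "g \<in> carrier G"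
  shows "[imat_det (action_matrix g) = 1] (mod int p)"
proof -
  interpret G: group G by (rule group_G)
  define h where "h a = imat_det (action_matrix a) mod int p" for a
  have monoid: "comm_monoid (residue_ring (int p))"
    using residues.comm_monoid[of "int p"] prime_gt_1_nat[OF prime_p] by (simp add: residues_def)
  have hom: "h \<in> hom G (residue_ring (int p))"
  proof (rule homI)
    show "h a \<in> carrier (residue_ring (int p))" for a
      using p_pos by (simp add: h_def residue_ring_def)
    show "h (a \<otimes>\<^bsub>G\<^esub> b) = h a \<otimes>\<^bsub>residue_ring (int p)\<^esub> h b" if "a \<in> carrier G" "b \<in> carrier G" for a b
      using imat_det_cong[OF action_matrix_mult[OF that]]
      by (simp add: h_def residue_ring_def imat_det_mult cong_def mod_mult_eq)
  qed
  have "h g = h \<one>\<^bsub>G\<^esub>" by (rule hom_to_comm_monoid_constant[OF simple non_comm hom monoid g])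
  then show ?thesis
    using imat_det_cong[OF action_matrix_one] by (simp add: h_def cong_def)
qed

lemma sign2_action_matrix:
  assumes simple: "simple_group G" and non_comm: "\<not> comm_group G" and p2: "p = 2"
    and g: "g \<in> carrier G"
  shows "even (imat_sign2 (action_matrix g))"
proof -
  interpret G: group G by (rule group_G)
  define h where "h a = imat_sign2 (action_matrix a) mod 2" for a
  have odd_det: "odd (imat_det (action_matrix a))" if "a \<in> carrier G" for a
    using det_action_matrix[OF simple non_comm that] p2 by (simp add: cong_2_iff)
  have monoid: "comm_monoid (add_monoid (residue_ring 2))"
    using residues.abelian_group[of 2] abelian_group.a_comm_group comm_group.axioms(1)
    by (fastforce simp: residues_def)
  have hom: "h \<in> hom G (add_monoid (residue_ring 2))"
  proof (rule homI)
    show "h a \<in> carrier (add_monoid (residue_ring 2))" for a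
      by (simp add: h_def residue_ring_def)
    show "h (a \<otimes>\<^bsub>G\<^esub> b) = h a \<otimes>\<^bsub>add_monoid (residue_ring 2)\<^esub> h b"
      if "a \<in> carrier G" "b \<in> carrier G" for a b
    proof -
      have "imat_cong 2 (action_matrix (a \<otimes>\<^bsub>G\<^esub> b)) (imat_mult (action_matrix a) (action_matrix b))"
        using action_matrix_mult[OF that] p2 by simp
      then show ?thesis
        using cong_trans[OF imat_sign2_cong imat_sign2_mult[OF odd_det odd_det]] that
        by (simp add: h_def residue_ring_def cong_def mod_add_eq)
    qed
  qed
  have "h g = h \<one>\<^bsub>G\<^esub>" by (rule hom_to_comm_monoid_constant[OF simple non_comm hom monoid g])
  moreover have "imat_cong 2 (action_matrix \<one>\<^bsub>G\<^esub>) imat_one" using action_matrix_one p2 by simp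
  ultimately show ?thesis
    using imat_sign2_cong
    by (simp add: h_def cong_def imat_one_def even_iff_mod_2_eq_zero)
qed

lemma quotient_action_kernel_eq_carrier_if_2:
  assumes simple: "simple_group G" and non_comm: "\<not> comm_group G" and p2: "p = 2"
  shows "quotient_action_kernel = carrier G"
proof (rule subgroup_containing_commutators_eq_carrier[OF simple non_comm])
  show "subgroup quotient_action_kernel G"
    by (rule normal_imp_subgroup[OF quotient_action_kernel_normal])
  interpret G: group G by (rule group_G)
  fix g h assume g: "g \<in> carrier G" and h: "h \<in> carrier G"
  define M where "M a = action_matrix a" for a
  have even: "even (imat_sign2 (M a))" and odd: "odd (imat_det (M a))" if "a \<in> carrier G" for a
    using sign2_action_matrix[OF simple non_comm p2 that] det_action_matrix[OF simple non_comm that] p2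
    by (simp_all add: M_def cong_2_iff)
  have "imat_mult (imat_mult (imat_mult (M g) (M h)) (M (inv\<^bsub>G\<^esub> g))) (M (inv\<^bsub>G\<^esub> h))
      = imat_mult (M g) (imat_mult (imat_mult (M h) (M (inv\<^bsub>G\<^esub> g))) (M (inv\<^bsub>G\<^esub> h)))"
    by (simp add: imat_mult_assoc)
  also have "imat_cong 2 \<dots> (imat_mult (M g) (imat_mult (imat_mult (M (inv\<^bsub>G\<^esub> g)) (M h)) (M (inv\<^bsub>G\<^esub> h))))"
    using g h by (intro imat_mult_cong imat_cong_refl imat_even_sign2_commute even odd) auto
  also have "\<dots> = imat_mult (imat_mult (M g) (M (inv\<^bsub>G\<^esub> g))) (imat_mult (M h) (M (inv\<^bsub>G\<^esub> h)))"
    by (simp add: imat_mult_assoc)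
  also have "imat_cong 2 \<dots> (imat_mult imat_one imat_one)"
    using g h action_matrix_inverse p2 by (intro imat_mult_cong) (simp_all add: M_def)
  finally have "imat_cong p (action_matrix (g \<otimes>\<^bsub>G\<^esub> h \<otimes>\<^bsub>G\<^esub> inv\<^bsub>G\<^esub> g \<otimes>\<^bsub>G\<^esub> inv\<^bsub>G\<^esub> h)) imat_one"
    using action_matrix_commutator[OF g h] p2 imat_cong_trans by (simp add: M_def)
  then show "g \<otimes>\<^bsub>G\<^esub> h \<otimes>\<^bsub>G\<^esub> inv\<^bsub>G\<^esub> g \<otimes>\<^bsub>G\<^esub> inv\<^bsub>G\<^esub> h \<in> quotient_action_kernel"
    using g h by (simp add: quotient_action_kernel_iff)
qed

text \<open>For odd \<open>p\<close>, an involution \<open>t\<close> acts on \<open>P/\<Phi>\<close> as \<open>\<plusminus>1\<close>. In the second case \<open>t\<close> is central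
  modulo the kernel, which therefore cannot be trivial.\<close>

lemma quotient_action_kernel_eq_carrier_if_odd:
  assumes simple: "simple_group G" and non_comm: "\<not> comm_group G" and p2: "p \<noteq> 2"
    and t: "t \<in> carrier G" "t \<noteq> \<one>\<^bsub>G\<^esub>" "t \<otimes>\<^bsub>G\<^esub> t = \<one>\<^bsub>G\<^esub>"
  shows "quotient_action_kernel = carrier G"
proof -
  interpret G: simple_group G by (rule simple)
  have N: "quotient_action_kernel = carrier G \<or> quotient_action_kernel = {\<one>\<^bsub>G\<^esub>}"
    by (rule G.no_real_normal_subgroup[OF quotient_action_kernel_normal])
  have "imat_cong p (imat_mult (action_matrix t) (action_matrix t)) imat_one"
    using action_matrix_mult[OF t(1) t(1)] action_matrix_one t(3)
    by (auto intro: imat_cong_trans imat_cong_sym)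
  then have "imat_cong p (action_matrix t) imat_one \<or> imat_cong p (action_matrix t) (- 1, 0, 0, - 1)"
    using imat_involution[of "int p"] prime_p p2 det_action_matrix[OF simple non_comm t(1)] by simp
  then show ?thesis
  proof
    assume "imat_cong p (action_matrix t) imat_one"
    then show ?thesis using N t quotient_action_kernel_iff by auto
  next
    assume minus: "imat_cong p (action_matrix t) (- 1, 0, 0, - 1)"
    have inv_t: "inv\<^bsub>G\<^esub> t = t" using G.inv_equality[OF t(3) t(1) t(1)] .
    have commutator: "t \<otimes>\<^bsub>G\<^esub> g \<otimes>\<^bsub>G\<^esub> inv\<^bsub>G\<^esub> t \<otimes>\<^bsub>G\<^esub> inv\<^bsub>G\<^esub> g \<in> quotient_action_kernel"
      if g: "g \<in> carrier G" for g
    proof -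
      have "imat_cong p (imat_mult (imat_mult (imat_mult (action_matrix t) (action_matrix g))
          (action_matrix (inv\<^bsub>G\<^esub> t))) (action_matrix (inv\<^bsub>G\<^esub> g)))
        (imat_mult (imat_mult (imat_mult (- 1, 0, 0, - 1) (action_matrix g)) (- 1, 0, 0, - 1))
          (action_matrix (inv\<^bsub>G\<^esub> g)))"
        using minus inv_t by (intro imat_mult_cong imat_cong_refl) auto
      also have "\<dots> = imat_mult (action_matrix g) (action_matrix (inv\<^bsub>G\<^esub> g))"
        by (simp add: imat_conj_neg_one)
      finally show ?thesis
        using action_matrix_commutator[OF t(1) g] action_matrix_inverse[OF g] g t
        by (auto simp: quotient_action_kernel_iff intro: imat_cong_trans)
    qed
    show ?thesis
    proof (rule ccontr)
      assume "quotient_action_kernel \<noteq> carrier G"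
      then have "t \<otimes>\<^bsub>G\<^esub> g = g \<otimes>\<^bsub>G\<^esub> t" if "g \<in> carrier G" for g
        using N commutator[OF that] that t by (simp add: G.commutator_eq_one_iff)
      then have "t = \<one>\<^bsub>G\<^esub>" by (rule central_element_of_simple_group[OF simple non_comm t(1)])
      then show False using t(2) by simp
    qed
  qed
qed


lemma action_kernel_eq_carrier:
  assumes simple: "simple_group G" and non_comm: "\<not> comm_group G"
    and t: "t \<in> carrier G" "t \<noteq> \<one>\<^bsub>G\<^esub>" "t \<otimes>\<^bsub>G\<^esub> t = \<one>\<^bsub>G\<^esub>"
    and m: "m \<in> carrier G" "m \<noteq> \<one>\<^bsub>G\<^esub>" "m \<otimes>\<^bsub>G\<^esub> m \<otimes>\<^bsub>G\<^esub> m = \<one>\<^bsub>G\<^esub>"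
  shows "action_kernel = carrier G"
proof -
  interpret G: simple_group G by (rule simple)
  obtain r and q :: nat where r: "r \<in> carrier G" "r \<noteq> \<one>\<^bsub>G\<^esub>" "r [^]\<^bsub>G\<^esub> q = \<one>\<^bsub>G\<^esub>"
    and q: "Factorial_Ring.prime q" "q \<noteq> p" and "r \<in> quotient_action_kernel"
  proof (cases "p = 2")
    case True
    have "Factorial_Ring.prime (3::nat)" by (simp add: prime_nat_iff' atLeastLessThan_nat_numeral)
    moreover have "m [^]\<^bsub>G\<^esub> (3::nat) = \<one>\<^bsub>G\<^esub>" using m by (simp add: numeral_3_eq_3 G.m_assoc)
    ultimately show ?thesis
      using that[of m 3] m True quotient_action_kernel_eq_carrier_if_2[OF simple non_comm] by auto
  next
    case False
    have "t [^]\<^bsub>G\<^esub> (2::nat) = \<one>\<^bsub>G\<^esub>" using t by (simp add: numeral_2_eq_2)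
    then show ?thesis
      using that[of t 2] t False quotient_action_kernel_eq_carrier_if_odd[OF simple non_comm False t]
      by auto
  qed
  then have "r \<in> action_kernel" using coprime_element_acts_trivially by blast
  then show ?thesis using G.no_real_normal_subgroup[OF action_kernel_normal] r by blast
qed
end

section \<open>Simple groups acting on two-generated \<open>p\<close>-groups\<close>

theorem simple_group_acts_trivially_on_two_generated_p_group:
  fixes P :: "('a, 'b) monoid_scheme" and G :: "('c, 'd) monoid_scheme"
  assumes "Factorial_Ring.prime p" and "group P" and "finite (carrier P)"
    and "\<exists>n. card (carrier P) = p ^ n"
    and generated: "\<exists>x y. x \<in> carrier P \<and> y \<in> carrier P \<and> generate P {x, y} = carrier P"
    and simple: "simple_group G" and non_comm: "\<not> comm_group G" and "\<phi> \<in> hom G (AutoGroup P)"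
    and t: "t \<in> carrier G" "t \<noteq> \<one>\<^bsub>G\<^esub>" "t \<otimes>\<^bsub>G\<^esub> t = \<one>\<^bsub>G\<^esub>"
    and m: "m \<in> carrier G" "m \<noteq> \<one>\<^bsub>G\<^esub>" "m \<otimes>\<^bsub>G\<^esub> m \<otimes>\<^bsub>G\<^esub> m = \<one>\<^bsub>G\<^esub>"
  shows "\<forall>g \<in> carrier G. \<forall>w \<in> carrier P. \<phi> g w = w"
proof -
  have action: "p_group_action P p G \<phi>"
    by (intro p_group_action.intro p_group.intro p_group_axioms.intro p_group_action_axioms.intro)
       (use assms simple_group.axioms(1) in \<open>simp_all add: order_def\<close>)
  interpret p_group_action P p G \<phi> by (rule action)
  have "action_kernel = carrier G"
  proof (cases "\<exists>z \<in> carrier P. generate P {z} = carrier P")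
    case True
    then show ?thesis using action_kernel_eq_carrier_if_cyclic[OF simple non_comm] by blast
  next
    case False
    obtain x y where "x \<in> carrier P" "y \<in> carrier P" "generate P {x, y} = carrier P"
      using generated by blast
    then interpret two_generated_action P p G \<phi> x y
      using False action
      by (intro two_generated_action.intro two_generated_p_group.intro two_generated_p_group_axioms.intro)
         (auto simp: p_group_action_def)
    show ?thesis by (rule action_kernel_eq_carrier[OF simple non_comm t m])
  qed
  then show ?thesis by (auto simp: action_kernel_def)
qed

lemmas (in ring) zero_one_minus_simps =
  l_minus r_minus minus_minus l_null r_null l_one r_one l_zero r_zero minus_zero r_neg l_neg

lemma (in domain) minus_one_not_zero: "\<ominus> \<one> \<noteq> \<zero>"
  using one_not_zero add.inv_eq_1_iff[OF one_closed] by simp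

lemma (in domain) PSL2_has_involution:
  "\<exists>t \<in> carrier (PSL2 R). t \<noteq> \<one>\<^bsub>PSL2 R\<^esub> \<and> t \<otimes>\<^bsub>PSL2 R\<^esub> t = \<one>\<^bsub>PSL2 R\<^esub>"
proof -
  define J where "J = (\<zero>, \<one>, \<ominus> \<one>, \<zero>)"
  define t where "t = SL2_centre R #>\<^bsub>SL2 R\<^esub> J"
  have t: "t = {J, (\<zero>, \<ominus> \<one>, \<one>, \<zero>)}"
    by (auto simp: t_def J_def r_coset_def SL2_centre_def SL2_def mat2_mult_def zero_one_minus_simps)
  have "J \<in> carrier (SL2 R)"
    by (simp add: J_def SL2_def SL2_carrier_def minus_eq zero_one_minus_simps)
  then have "t \<in> carrier (PSL2 R)" by (auto simp: t_def PSL2_def carrier_FactGroup)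
  moreover have "J \<notin> SL2_centre R"
    using one_not_zero minus_one_not_zero by (auto simp: J_def SL2_centre_def)
  then have "t \<noteq> \<one>\<^bsub>PSL2 R\<^esub>" by (auto simp: t PSL2_def)
  moreover have "t \<otimes>\<^bsub>PSL2 R\<^esub> t = \<one>\<^bsub>PSL2 R\<^esub>"
    by (auto simp: t PSL2_def set_mult_def SL2_centre_def SL2_def mat2_mult_def J_def zero_one_minus_simps)
  ultimately show ?thesis by blast
qed

lemma (in domain) PSL2_has_element_of_order_3:
  "\<exists>m \<in> carrier (PSL2 R). m \<noteq> \<one>\<^bsub>PSL2 R\<^esub> \<and> m \<otimes>\<^bsub>PSL2 R\<^esub> m \<otimes>\<^bsub>PSL2 R\<^esub> m = \<one>\<^bsub>PSL2 R\<^esub>"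
proof -
  define M where "M = (\<zero>, \<one>, \<ominus> \<one>, \<ominus> \<one>)"
  define m where "m = SL2_centre R #>\<^bsub>SL2 R\<^esub> M"
  have m: "m = {M, (\<zero>, \<ominus> \<one>, \<one>, \<one>)}"
    by (auto simp: m_def M_def r_coset_def SL2_centre_def SL2_def mat2_mult_def zero_one_minus_simps)
  have "M \<in> carrier (SL2 R)"
    by (simp add: M_def SL2_def SL2_carrier_def minus_eq zero_one_minus_simps)
  then have "m \<in> carrier (PSL2 R)" by (auto simp: m_def PSL2_def carrier_FactGroup)
  moreover have "M \<notin> SL2_centre R"
    using one_not_zero minus_one_not_zero by (auto simp: M_def SL2_centre_def)
  then have "m \<noteq> \<one>\<^bsub>PSL2 R\<^esub>" by (auto simp: m PSL2_def)
  moreover have "m \<otimes>\<^bsub>PSL2 R\<^esub> m = {(\<ominus> \<one>, \<ominus> \<one>, \<one>, \<zero>), (\<one>, \<one>, \<ominus> \<one>, \<zero>)}"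
    by (auto simp: m PSL2_def set_mult_def SL2_def mat2_mult_def M_def zero_one_minus_simps)
  then have "m \<otimes>\<^bsub>PSL2 R\<^esub> m \<otimes>\<^bsub>PSL2 R\<^esub> m = \<one>\<^bsub>PSL2 R\<^esub>"
    by (auto simp: m PSL2_def set_mult_def SL2_centre_def SL2_def mat2_mult_def M_def zero_one_minus_simps)
  ultimately show ?thesis by blast
qed

theorem lemma3p6:
  fixes P :: "('g, 'c) monoid_scheme"
    and K :: "('a, 'b) ring_scheme"
    and p f :: nat
    and \<phi> :: "('a \<times> 'a \<times> 'a \<times> 'a) set \<Rightarrow> 'g \<Rightarrow> 'g"
  assumes "Factorial_Ring.prime p"
    and "group P" and "finite (carrier P)"
    and "\<exists>n. card (carrier P) = p ^ n"
    and "\<exists>x y. x \<in> carrier P \<and> y \<in> carrier P \<and> generate P {x, y} = carrier P"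
    and "field K" and "finite (carrier K)" and "card (carrier K) = f"
    and "simple_group (PSL2 K)" and "\<not> comm_group (PSL2 K)"
    and "\<phi> \<in> hom (PSL2 K) (AutoGroup P)"
  shows "\<forall>g \<in> carrier (PSL2 K). \<forall>x \<in> carrier P. \<phi> g x = x"
proof -
  interpret K: field K by fact
  obtain t where "t \<in> carrier (PSL2 K)" "t \<noteq> \<one>\<^bsub>PSL2 K\<^esub>" "t \<otimes>\<^bsub>PSL2 K\<^esub> t = \<one>\<^bsub>PSL2 K\<^esub>"
    using K.PSL2_has_involution by blast
  moreover obtain m where "m \<in> carrier (PSL2 K)" "m \<noteq> \<one>\<^bsub>PSL2 K\<^esub>"
    "m \<otimes>\<^bsub>PSL2 K\<^esub> m \<otimes>\<^bsub>PSL2 K\<^esub> m = \<one>\<^bsub>PSL2 K\<^esub>"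
    using K.PSL2_has_element_of_order_3 by blast
  ultimately show ?thesis
    using simple_group_acts_trivially_on_two_generated_p_group[OF assms(1-5,9-11)] by blast
qed

end
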